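(* Let $\varepsilon\in\{-1,1\}$, $\nu>0$, $t>a>0$, and let $f\in C((0,\infty);L^1(\mathbb{R}^2))$ with $\partial_y^2 f\in C((0,\infty);L^1(\mathbb{R}^2))$. Then there is a constant $C>0$ (independent of $a,t,f$) such that $$\Big\|\int_a^t S(t-\tau)*f(\tau)\,d\tau\Big\|_{L^\infty}\le C\sqrt t\sup_{a\le\tau\le t}\big(\|f(\cdot,\cdot,\tau)\|_{L^1}+\|\partial_y^2f(\cdot,\cdot,\tau)\|_{L^1}\big),$$ $$\Big\|\int_a^t K(t-\tau)*f(\tau)\,d\tau\Big\|_{L^\infty}\le C\sqrt t\sup_{a\le\tau\le t}\big(\|f(\cdot,\cdot,\tau)\|_{L^1}+\|\partial_y^2f(\cdot,\cdot,\tau)\|_{L^1}\big).$$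
   Context: Fourier transform on $\mathbb{R}^2$: $\hat f(\xi,\eta)=\frac{1}{2\pi}\int_{\mathbb{R}^2}e^{-ix\xi-iy\eta}f\,dx\,dy$, inverse $\mathcal{F}^{-1}[g](x,y)=\frac{1}{2\pi}\int e^{ix\xi+iy\eta}g\,d\xi\,d\eta$. Convolution is in $(x,y)$. $S(x,y,t):=\mathcal{F}^{-1}\big[\frac{1}{2\pi}e^{-\nu t\xi^2+it(\xi^3-\varepsilon\eta^2/\xi)}\big](x,y)$; $K(x,y,t):=\mathcal{F}^{-1}\big[\frac{1}{2\pi}e^{-\nu t\xi^2-it\varepsilon\eta^2/\xi}\big](x,y)$, which equals $t^{-5/4}K_*(xt^{-1/2},yt^{-3/4})$ with $K_*(x,y):=\frac{1}{4\pi^{3/2}\nu^{3/4}}\int_0^\infty r^{-1/4}e^{-r}\cos\big(x\sqrt{r/\nu}+\frac{y^2}{4\varepsilon}\sqrt{r/\nu}-\frac{\pi}{4}\varepsilon\big)dr$. *)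

theory Defs
  imports "HOL-Analysis.Analysis"
begin

definition Kstar :: "real \<Rightarrow> real \<Rightarrow> real \<Rightarrow> real \<Rightarrow> real" where
  "Kstar eps nu x y = 1 / (4 * pi powr (3/2) * nu powr (3/4)) *
     (LBINT r:{0<..}. r powr (-1/4) * exp (-r) *
        cos (x * sqrt (r / nu) + y^2 / (4 * eps) * sqrt (r / nu) - pi / 4 * eps))"

definition Kker :: "real \<Rightarrow> real \<Rightarrow> real \<Rightarrow> real \<Rightarrow> real \<Rightarrow> real" where
  "Kker eps nu x y t = t powr (-5/4) * Kstar eps nu (x * t powr (-1/2)) (y * t powr (-3/4))"

text \<open>S(x,y,t): the inverse Fourier transform of (1/2pi) exp(-nu t xi^2 + i t (xi^3 - eps eta^2/xi)),
  with the (Fresnel) eta-integral evaluated explicitly and the remaining xi-integral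
  written in real form (the kernel is real).\<close>
definition Sker :: "real \<Rightarrow> real \<Rightarrow> real \<Rightarrow> real \<Rightarrow> real \<Rightarrow> real" where
  "Sker eps nu x y t = 1 / (2 * pi powr (3/2) * sqrt t) *
     (LBINT \<xi>:{0<..}. sqrt \<xi> * exp (- nu * t * \<xi>^2) *
        cos (\<xi> * x + t * \<xi>^3 + y^2 * \<xi> / (4 * eps * t) - pi / 4 * eps))"

definition L1norm :: "(real \<times> real \<Rightarrow> real) \<Rightarrow> real" where
  "L1norm h = (\<integral>z. \<bar>h z\<bar> \<partial>lborel)"

definition L1_cont :: "(real \<Rightarrow> real \<times> real \<Rightarrow> real) \<Rightarrow> bool" where
  "L1_cont f \<longleftrightarrow> (\<forall>\<tau>>0. integrable lborel (f \<tau>)) \<and>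
     (\<forall>\<tau>0>0. ((\<lambda>\<tau>. L1norm (\<lambda>z. f \<tau> z - f \<tau>0 z)) \<longlongrightarrow> 0) (at \<tau>0 within {0<..}))"

text \<open>g is the weak (distributional) derivative \<partial>_y^2 h: tested against compactly supported
  continuous \<phi> which are C^2 in y with continuous \<partial>_y \<phi> = \<phi>1, \<partial>_y^2 \<phi> = \<phi>2
  (equivalent to testing with C_c^\<infinity> by mollification).\<close>
definition weak_dyy :: "(real \<times> real \<Rightarrow> real) \<Rightarrow> (real \<times> real \<Rightarrow> real) \<Rightarrow> bool" where
  "weak_dyy h g \<longleftrightarrow>
    (\<forall>\<phi> \<phi>1 \<phi>2. continuous_on UNIV \<phi> \<and> continuous_on UNIV \<phi>1 \<and> continuous_on UNIV \<phi>2 \<and>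
        bounded {z. \<phi> z \<noteq> 0} \<and>
        (\<forall>x y. ((\<lambda>s. \<phi> (x, s)) has_real_derivative \<phi>1 (x, y)) (at y)) \<and>
        (\<forall>x y. ((\<lambda>s. \<phi>1 (x, s)) has_real_derivative \<phi>2 (x, y)) (at y))
      \<longrightarrow> (\<integral>z. h z * \<phi>2 z \<partial>lborel) = (\<integral>z. g z * \<phi> z \<partial>lborel))"

definition duhamel :: "(real \<Rightarrow> real \<Rightarrow> real \<Rightarrow> real) \<Rightarrow> (real \<Rightarrow> real \<times> real \<Rightarrow> real)
    \<Rightarrow> real \<Rightarrow> real \<Rightarrow> real \<times> real \<Rightarrow> real" where
  "duhamel Ker f a t z = (LBINT \<tau>:{a..t}.
      (\<integral>w. Ker (fst z - fst w) (snd z - snd w) (t - \<tau>) * f \<tau> w \<partial>lborel))"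

end

theory Submission
  imports Defs "HOL-Probability.Distributions"
begin

text \<open>
  Both kernels are superpositions, over a frequency \<open>r > 0\<close> with weight \<open>W r\<close>, of chirps
  \<open>cos (\<alpha> r * X + \<beta> r * Y\<^sup>2 + \<gamma> r)\<close>. A primitive of \<open>v \<mapsto> cos (l * v\<^sup>2 + \<theta>)\<close> oscillates by
  at most \<open>5 / sqrt l\<close> (integrate by parts away from the stationary point \<open>v = 0\<close>); subtracting local
  means turns it into a function \<open>Q\<close>, bounded by \<open>5 / sqrt l\<close>, whose second derivative is the chirp
  up to an error of the same size. Moving these two \<open>y\<close>-derivatives onto \<open>f\<close>, i.e. onto its weak
  derivative \<open>g\<close>, bounds the integral of \<open>f\<close> against a chirp of curvature \<open>\<beta>\<close> by
  \<open>10 / sqrt \<bar>\<beta>\<bar>\<close> times \<open>L1norm f + L1norm g\<close>. Integrating this over \<open>r\<close> against \<open>W\<close> bounds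
  the convolution of \<open>f\<close> with either kernel at time \<open>s\<close> by \<open>C / sqrt s\<close> times the same norms, and
  \<open>\<integral>\<^sub>a\<^sup>t 1 / sqrt (t - \<tau>) d\<tau> \<le> 2 * sqrt t\<close>.
\<close>

lemma abs_diff_le_of_deriv_dominated:
  fixes F G F' G' :: "real \<Rightarrow> real"
  assumes "u \<le> v"
    and F: "\<And>x. u \<le> x \<Longrightarrow> x \<le> v \<Longrightarrow> (F has_real_derivative F' x) (at x)"
    and G: "\<And>x. u \<le> x \<Longrightarrow> x \<le> v \<Longrightarrow> (G has_real_derivative G' x) (at x)"
    and dom: "\<And>x. u \<le> x \<Longrightarrow> x \<le> v \<Longrightarrow> \<bar>F' x\<bar> \<le> G' x"
  shows "\<bar>F v - F u\<bar> \<le> G v - G u"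
proof -
  have "G u + F u \<le> G v + F v"
    using DERIV_nonneg_imp_nondecreasing[OF \<open>u \<le> v\<close>, of "\<lambda>x. G x + F x"] F G dom
    by (fastforce intro: DERIV_add)
  moreover have "G u - F u \<le> G v - F v"
    using DERIV_nonneg_imp_nondecreasing[OF \<open>u \<le> v\<close>, of "\<lambda>x. G x - F x"] F G dom
    by (fastforce intro: DERIV_diff)
  ultimately show ?thesis by linarith
qed

lemma one_div_diff_le_of_same_side:
  fixes u v T :: real
  assumes "0 < T" and "u \<le> v" and "T \<le> u \<or> v \<le> - T"
  shows "1 / u - 1 / v \<le> 1 / T"
  using assms(3)
proof
  assume "T \<le> u"
  then have "1 / u \<le> 1 / T" "0 < 1 / v"
    using assms(1,2) by (auto intro: divide_left_mono)
  then show ?thesis by linarith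
next
  assume "v \<le> - T"
  then have "1 / (- v) \<le> 1 / T"
    using assms(1) by (intro divide_left_mono) (auto simp: mult_neg_pos)
  moreover have "1 / u < 0"
    using \<open>v \<le> - T\<close> assms(1,2) by simp
  ultimately show ?thesis by (simp only: divide_minus_right)
qed

lemma chirp_antiderivative_oscillation_away_from_zero:
  fixes B :: "real \<Rightarrow> real"
  assumes l: "l > 0"
    and B: "\<And>w. (B has_real_derivative cos (l * w\<^sup>2 + \<theta>)) (at w)"
    and "u \<le> v" and far: "1 / sqrt l \<le> u \<or> v \<le> - (1 / sqrt l)"
  shows "\<bar>B v - B u\<bar> \<le> 3 / (2 * sqrt l)"
proof -
  define T where "T = 1 / sqrt l"
  have T: "T > 0" "1 / T = sqrt l" "l * T = sqrt l"
    using l by (auto simp: T_def field_simps real_sqrt_mult[symmetric] simp flip: power2_eq_square)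
  have w_far: "T \<le> \<bar>w\<bar>" if "u \<le> w" "w \<le> v" for w
    using far that T_def by auto
  define E where "E w = sin (l * w\<^sup>2 + \<theta>) / (2 * l * w)" for w
  \<comment> \<open>integration by parts: \<open>E' w = cos (l w\<^sup>2 + \<theta>) - sin (l w\<^sup>2 + \<theta>) / (2 l w\<^sup>2)\<close>\<close>
  have E': "((\<lambda>w. B w - E w) has_real_derivative sin (l * w\<^sup>2 + \<theta>) / (2 * l * w\<^sup>2)) (at w)"
    if "w \<noteq> 0" for w
    unfolding E_def using that l
    by (auto intro!: derivative_eq_intros B simp: power2_eq_square field_simps)
  have "\<bar>(B v - E v) - (B u - E u)\<bar> \<le> - 1 / (2 * l * v) - - 1 / (2 * l * u)"
  proof (rule abs_diff_le_of_deriv_dominated[OF \<open>u \<le> v\<close>])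
    fix w assume w: "u \<le> w" "w \<le> v"
    then have "w \<noteq> 0" using w_far T by force
    then show "((\<lambda>w. B w - E w) has_real_derivative sin (l * w\<^sup>2 + \<theta>) / (2 * l * w\<^sup>2)) (at w)"
      by (rule E')
    show "((\<lambda>w. - 1 / (2 * l * w)) has_real_derivative 1 / (2 * l * w\<^sup>2)) (at w)"
      using l \<open>w \<noteq> 0\<close> by (auto intro!: derivative_eq_intros simp: power2_eq_square field_simps)
    show "\<bar>sin (l * w\<^sup>2 + \<theta>) / (2 * l * w\<^sup>2)\<bar> \<le> 1 / (2 * l * w\<^sup>2)"
      using l \<open>w \<noteq> 0\<close> by (simp add: abs_divide divide_right_mono)
  qed
  also have "\<dots> = (1 / u - 1 / v) / (2 * l)"
    using l by (simp add: field_simps)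
  also have "\<dots> \<le> (1 / T) / (2 * l)"
    using one_div_diff_le_of_same_side[OF T(1) \<open>u \<le> v\<close>] far l by (simp add: T_def divide_right_mono)
  also have "\<dots> = 1 / (2 * sqrt l)"
  proof -
    have "sqrt l * sqrt l = l" using l by simp
    then show ?thesis using l by (simp add: T(2) field_simps)
  qed
  finally have main: "\<bar>(B v - E v) - (B u - E u)\<bar> \<le> 1 / (2 * sqrt l)" .
  have E_bound: "\<bar>E w\<bar> \<le> 1 / (2 * sqrt l)" if "u \<le> w" "w \<le> v" for w
  proof -
    have "\<bar>E w\<bar> \<le> 1 / (2 * l * \<bar>w\<bar>)"
      unfolding E_def using l w_far[OF that] T by (simp add: abs_divide abs_mult divide_right_mono)
    also have "\<dots> \<le> 1 / (2 * l * T)"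
      using l T(1) w_far[OF that] by (intro divide_left_mono mult_left_mono) auto
    finally show ?thesis using T by (simp add: mult.assoc)
  qed
  show ?thesis
    using main E_bound[of u] E_bound[of v] \<open>u \<le> v\<close> by (simp add: abs_le_iff)
qed

lemma chirp_antiderivative_oscillation:
  fixes B :: "real \<Rightarrow> real"
  assumes l: "l > 0" and B: "\<And>w. (B has_real_derivative cos (l * w\<^sup>2 + \<theta>)) (at w)"
  shows "\<bar>B v - B u\<bar> \<le> 5 / sqrt l"
proof -
  define T where "T = 1 / sqrt l"
  have T: "T > 0" using l by (simp add: T_def)
  define clamp where "clamp w = max (- T) (min T w)" for w
  have outer: "\<bar>B w - B (clamp w)\<bar> \<le> 3 / (2 * sqrt l)" for w
  proof -
    consider "T \<le> w" | "w \<le> - T" | "- T < w \<and> w < T" by linarith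
    then show ?thesis
    proof cases
      case 1
      then show ?thesis
        using chirp_antiderivative_oscillation_away_from_zero[OF l B, of T w] T by (simp add: clamp_def T_def)
    next
      case 2
      then show ?thesis
        using chirp_antiderivative_oscillation_away_from_zero[OF l B, of w "- T"] T
        by (simp add: clamp_def T_def abs_minus_commute)
    qed (use l in \<open>simp add: clamp_def\<close>)
  qed
  have clamp: "- T \<le> clamp w \<and> clamp w \<le> T" for w
    using T by (simp add: clamp_def)
  have "\<bar>B (clamp v) - B (clamp u)\<bar> \<le> 1 * \<bar>clamp v - clamp u\<bar>"
    using field_differentiable_bound[of UNIV B "\<lambda>w. cos (l * w\<^sup>2 + \<theta>)" 1] B by simp
  also have "\<dots> \<le> 2 / sqrt l"
    using clamp[of u] clamp[of v] by (simp add: T_def abs_le_iff)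
  finally show ?thesis
    using outer[of u] outer[of v] by (simp add: abs_le_iff)
qed

lemma isCont_obtain_antiderivative:
  fixes f :: "real \<Rightarrow> real"
  assumes "\<And>x. isCont f x"
  obtains F where "\<And>x. (F has_real_derivative f x) (at x)"
proof -
  have "\<exists>F. \<forall>x::real. - \<infinity> < ereal x \<longrightarrow> ereal x < \<infinity> \<longrightarrow> (F has_vector_derivative f x) (at x)"
    using assms by (intro einterval_antiderivative) auto
  then show ?thesis
    using that by (auto simp: has_real_derivative_iff_has_vector_derivative)
qed

lemma has_real_derivative_shift_scale:
  assumes "\<And>x. (f has_real_derivative f' x) (at x)"
  shows "((\<lambda>u. f (a + c * u)) has_real_derivative c * f' (a + c * u)) (at u)"
proof -
  have "((\<lambda>u. a + c * u) has_real_derivative c) (at u)"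
    by (auto intro!: derivative_eq_intros)
  from DERIV_chain2[OF assms this] show ?thesis by (simp add: mult.commute)
qed

lemma abs_antiderivative_minus_local_mean_le:
  fixes B B1 B2 :: "real \<Rightarrow> real"
  assumes B1: "\<And>w. (B1 has_real_derivative B w) (at w)"
    and B2: "\<And>w. (B2 has_real_derivative B1 w) (at w)"
    and osc: "\<And>u v. \<bar>B v - B u\<bar> \<le> K"
  shows "\<bar>B1 v - (B2 (v + 1) - B2 (v - 1)) / 2\<bar> \<le> K / 2"
proof -
  have K: "0 \<le> K" using osc[of 0 0] by simp
  define V where "V u = 2 * B1 v - B1 (v + u) - B1 (v - u)" for u
  define U where "U u = 2 * u * B1 v - (B2 (v + u) - B2 (v - u))" for u
  have V': "(V has_real_derivative B (v - u) - B (v + u)) (at u)" for u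
    using has_real_derivative_shift_scale[OF B1, of v 1 u] has_real_derivative_shift_scale[OF B1, of v "-1" u]
    unfolding V_def by (auto intro!: derivative_eq_intros)
  have U': "(U has_real_derivative V u) (at u)" for u
    using has_real_derivative_shift_scale[OF B2, of v 1 u] has_real_derivative_shift_scale[OF B2, of v "-1" u]
    unfolding U_def V_def by (auto intro!: derivative_eq_intros)
  have V_bound: "\<bar>V u\<bar> \<le> K" if "u \<in> {0..1}" for u
  proof -
    have "\<bar>V x - V y\<bar> \<le> K * \<bar>x - y\<bar>" for x y
      using field_differentiable_bound[of UNIV V "\<lambda>u. B (v - u) - B (v + u)" K] V' osc by simp
    then have "\<bar>V u - V 0\<bar> \<le> K * \<bar>u - 0\<bar>" .
    also have "\<dots> \<le> K" using that K by (simp add: mult_left_le)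
    finally show ?thesis by (simp add: V_def)
  qed
  have "norm (U 1 - U 0) \<le> K * norm (1 - 0 :: real)"
  proof (rule field_differentiable_bound[where S="{0..1}" and f'=V])
    show "(U has_field_derivative V u) (at u within {0..1})" for u
      using U' by (rule has_field_derivative_at_within)
  qed (use V_bound in auto)
  moreover have "B1 v - (B2 (v + 1) - B2 (v - 1)) / 2 = (U 1 - U 0) / 2"
    by (simp add: U_def field_simps)
  ultimately show ?thesis by (simp only:) simp
qed

lemma double_antiderivative_of_bounded_oscillation:
  fixes B b :: "real \<Rightarrow> real"
  assumes B: "\<And>w. (B has_real_derivative b w) (at w)"
    and osc: "\<And>u v. \<bar>B v - B u\<bar> \<le> K"
  obtains Q Q' R where "\<And>v. (Q has_real_derivative Q' v) (at v)"
    and "\<And>v. (Q' has_real_derivative b v - R v) (at v)"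
    and "continuous_on UNIV R" and "\<And>v. \<bar>Q v\<bar> \<le> K" and "\<And>v. \<bar>Q' v\<bar> \<le> K"
    and "\<And>v. \<bar>R v\<bar> \<le> K"
proof -
  obtain B1 where B1: "\<And>w. (B1 has_real_derivative B w) (at w)"
    using isCont_obtain_antiderivative B DERIV_isCont by metis
  obtain B2 where B2: "\<And>w. (B2 has_real_derivative B1 w) (at w)"
    using isCont_obtain_antiderivative B1 DERIV_isCont by metis
  \<comment> \<open>Subtract from \<open>B1\<close> and \<open>B\<close> their means over \<open>[v - 1, v + 1]\<close>; \<open>R\<close> is the resulting error
    in the second derivative.\<close>
  define Q where "Q v = B1 v - (B2 (v + 1) - B2 (v - 1)) / 2" for v
  define Q' where "Q' v = B v - (B1 (v + 1) - B1 (v - 1)) / 2" for v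
  define R where "R v = (B (v + 1) - B (v - 1)) / 2" for v
  have K: "0 \<le> K" using osc[of 0 0] by simp
  have "(Q has_real_derivative Q' v) (at v)" for v
    using has_real_derivative_shift_scale[OF B2, of 1 1 v] has_real_derivative_shift_scale[OF B2, of "-1" 1 v]
    unfolding Q_def Q'_def by (auto intro!: derivative_eq_intros B1 simp: add.commute)
  moreover have "(Q' has_real_derivative b v - R v) (at v)" for v
    using has_real_derivative_shift_scale[OF B1, of 1 1 v] has_real_derivative_shift_scale[OF B1, of "-1" 1 v]
    unfolding Q'_def R_def by (auto intro!: derivative_eq_intros B simp: add.commute)
  moreover have "continuous_on UNIV R"
    unfolding R_def
    by (intro continuous_at_imp_continuous_on ballI continuous_intros isCont_o2[OF _ DERIV_isCont[OF B]]) auto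
  moreover have "\<bar>R v\<bar> \<le> K" for v
    using osc[of "v - 1" "v + 1"] K by (simp add: R_def)
  moreover have "\<bar>Q' v\<bar> \<le> K" for v
  proof -
    obtain z where "B1 (v + 1) - B1 (v - 1) = ((v + 1) - (v - 1)) * B z"
      using MVT2[of "v - 1" "v + 1" B1 B] B1 by auto
    then show ?thesis using osc[of z v] by (simp add: Q'_def)
  qed
  moreover have "\<bar>Q v\<bar> \<le> K" for v
    using abs_antiderivative_minus_local_mean_le[OF B1 B2 osc, of v] K by (simp add: Q_def)
  ultimately show ?thesis using that by blast
qed

lemma has_real_derivative_max0_power:
  fixes x :: real
  assumes n: "n \<ge> 2"
  shows "((\<lambda>u. (max 0 u) ^ n) has_real_derivative real n * (max 0 x) ^ (n - 1)) (at x)"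
proof (cases x "0::real" rule: linorder_cases)
  case less
  have ev: "\<forall>\<^sub>F u in nhds x. (max 0 u) ^ n = (0::real)"
    using eventually_nhds_in_open[of "{..<0}" x] less n
    by (auto elim!: eventually_mono simp: max_def)
  have "real n * (max 0 x) ^ (n - 1) = 0"
    using less n by simp
  then show ?thesis
    by (simp only:) (subst DERIV_cong_ev[OF refl ev refl], rule DERIV_const)
next
  case greater
  have "\<forall>\<^sub>F u in nhds x. (max 0 u) ^ n = u ^ n"
    using eventually_nhds_in_open[of "{0<..}" x] greater
    by (auto elim!: eventually_mono simp: max_def)
  then show ?thesis
    using greater by (subst DERIV_cong_ev[OF refl _ refl]) (auto intro!: derivative_eq_intros)
next
  case equal
  have "((\<lambda>h. (max 0 h) ^ n / h) \<longlongrightarrow> 0) (at (0::real))"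
  proof (rule Lim_null_comparison)
    have "\<forall>\<^sub>F h in at (0::real). h \<in> {-1<..<1}"
      by (rule eventually_at_in_open') auto
    then show "\<forall>\<^sub>F h in at 0. norm ((max 0 h) ^ n / h) \<le> \<bar>h\<bar>"
    proof (rule eventually_mono)
      fix h :: real assume h: "h \<in> {-1<..<1}"
      obtain m where m: "n = Suc (Suc m)" using n by (metis add_2_eq_Suc le_Suc_ex)
      show "norm ((max 0 h) ^ n / h) \<le> \<bar>h\<bar>"
      proof (cases "h > 0")
        case True
        then have "norm ((max 0 h) ^ n / h) = h * h ^ m" using m by simp
        also have "\<dots> \<le> h" using True h by (simp add: mult_left_le power_le_one)
        finally show ?thesis by simp
      qed (use n in \<open>simp add: zero_power\<close>)
    qed
    show "((\<lambda>h. \<bar>h\<bar>) \<longlongrightarrow> 0) (at (0::real))"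
      using tendsto_rabs[OF tendsto_ident_at[of "0::real" UNIV]] by simp
  qed
  then show ?thesis
    using n unfolding equal DERIV_def by (simp add: zero_power)
qed

definition bump :: "real \<Rightarrow> real" where
  "bump x = (max 0 (1 - x\<^sup>2)) ^ 3"

definition bump' :: "real \<Rightarrow> real" where
  "bump' x = - 6 * x * (max 0 (1 - x\<^sup>2)) ^ 2"

definition bump'' :: "real \<Rightarrow> real" where
  "bump'' x = 24 * x\<^sup>2 * max 0 (1 - x\<^sup>2) - 6 * (max 0 (1 - x\<^sup>2)) ^ 2"

lemma has_real_derivative_bump: "(bump has_real_derivative bump' x) (at x)"
proof -
  have "((\<lambda>x. (max 0 (1 - x\<^sup>2)) ^ 3) has_real_derivative real 3 * (max 0 (1 - x\<^sup>2)) ^ (3 - 1) * (- 2 * x)) (at x)"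
    by (rule DERIV_chain2[OF has_real_derivative_max0_power]) (auto intro!: derivative_eq_intros)
  then show ?thesis unfolding bump_def bump'_def by (simp add: algebra_simps)
qed

lemma has_real_derivative_bump': "(bump' has_real_derivative bump'' x) (at x)"
proof -
  have "((\<lambda>x. (max 0 (1 - x\<^sup>2)) ^ 2) has_real_derivative real 2 * (max 0 (1 - x\<^sup>2)) ^ (2 - 1) * (- 2 * x)) (at x)"
    by (rule DERIV_chain2[OF has_real_derivative_max0_power]) (auto intro!: derivative_eq_intros)
  moreover have "((\<lambda>x. - 6 * x) has_real_derivative - 6) (at x)"
    by (auto intro!: derivative_eq_intros)
  ultimately have "((\<lambda>x. - 6 * x * (max 0 (1 - x\<^sup>2)) ^ 2) has_real_derivative
      - 6 * (max 0 (1 - x\<^sup>2)) ^ 2 + real 2 * (max 0 (1 - x\<^sup>2)) ^ (2 - 1) * (- 2 * x) * (- 6 * x)) (at x)"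
    by (rule DERIV_mult[rotated])
  then show ?thesis unfolding bump'_def bump''_def by (simp add: algebra_simps power2_eq_square)
qed

lemma bump_0 [simp]: "bump 0 = 1"
  by (simp add: bump_def)

lemma bump_eq_0:
  assumes "1 \<le> \<bar>x\<bar>" shows "bump x = 0"
proof -
  have "1 \<le> \<bar>x\<bar> ^ 2" by (rule one_le_power[OF assms])
  then show ?thesis by (simp add: bump_def)
qed

lemma bump_bounds: "\<bar>bump x\<bar> \<le> 1" "\<bar>bump' x\<bar> \<le> 6" "\<bar>bump'' x\<bar> \<le> 30"
proof -
  define m where "m = max 0 (1 - x\<^sup>2)"
  have m: "0 \<le> m" "m \<le> 1" "x\<^sup>2 * m \<le> 1" "\<bar>x\<bar> * m \<le> 1"
    unfolding m_def by (auto simp: max_def abs_square_le_1 mult_le_one power_le_one)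
  show "\<bar>bump x\<bar> \<le> 1"
    unfolding bump_def m_def[symmetric] using m by (simp add: power_le_one)
  have "\<bar>bump' x\<bar> = 6 * (\<bar>x\<bar> * m) * m"
    unfolding bump'_def m_def[symmetric] using m by (simp add: abs_mult power2_eq_square)
  also have "\<dots> \<le> 6 * 1 * 1" using m by (intro mult_mono) auto
  finally show "\<bar>bump' x\<bar> \<le> 6" by simp
  have "\<bar>bump'' x\<bar> \<le> 24 * (x\<^sup>2 * m) + 6 * (m * m)"
    unfolding bump''_def m_def[symmetric] using m by (simp add: abs_le_iff power2_eq_square)
  also have "\<dots> \<le> 24 * 1 + 6 * (1 * 1)" using m by (intro add_mono mult_left_mono mult_mono) auto
  finally show "\<bar>bump'' x\<bar> \<le> 30" by simp
qed

lemma isCont_bump: "isCont bump x" and isCont_bump': "isCont bump' x"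
  using has_real_derivative_bump has_real_derivative_bump' by (auto intro: DERIV_isCont)

lemma isCont_bump'': "isCont bump'' x"
  unfolding bump''_def by (intro continuous_intros)

lemma has_real_derivative_bump_scaled:
  "((\<lambda>s. bump (c * s)) has_real_derivative c * bump' (c * y)) (at y)"
  "((\<lambda>s. bump' (c * s)) has_real_derivative c * bump'' (c * y)) (at y)"
  using DERIV_chain2[OF has_real_derivative_bump DERIV_cmult_Id[of c y]]
    DERIV_chain2[OF has_real_derivative_bump' DERIV_cmult_Id[of c y]]
  by (simp_all only: mult.commute[of "bump' (c * y)" c] mult.commute[of "bump'' (c * y)" c])

lemma bounded_bump_cutoff_support:
  fixes h :: "real \<times> real \<Rightarrow> real"
  assumes c: "0 < c"
  shows "bounded {z. bump (c * fst z) * (bump (c * snd z) * h z) \<noteq> 0}"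
proof -
  have "norm z \<le> 2 / c" if "bump (c * fst z) * (bump (c * snd z) * h z) \<noteq> 0" for z
  proof -
    have "bump (c * fst z) \<noteq> 0" "bump (c * snd z) \<noteq> 0"
      using that by auto
    then have "\<bar>c * fst z\<bar> < 1" "\<bar>c * snd z\<bar> < 1"
      by (meson bump_eq_0 not_le)+
    then have "\<bar>fst z\<bar> + \<bar>snd z\<bar> \<le> 2 / c"
      using c by (simp add: abs_mult field_simps)
    moreover have "norm z \<le> \<bar>fst z\<bar> + \<bar>snd z\<bar>"
      by (cases z) (simp add: norm_Pair sqrt_sum_squares_le_sum_abs)
    ultimately show ?thesis by simp
  qed
  then show ?thesis unfolding bounded_iff by blast
qed

lemma weak_dyy_cutoff:
  fixes F G \<psi> \<psi>' \<psi>'' :: "real \<times> real \<Rightarrow> real"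
  assumes FG: "weak_dyy F G" and c: "c > 0"
    and cont: "continuous_on UNIV \<psi>" "continuous_on UNIV \<psi>'" "continuous_on UNIV \<psi>''"
    and \<psi>': "\<And>x y. ((\<lambda>s. \<psi> (x, s)) has_real_derivative \<psi>' (x, y)) (at y)"
    and \<psi>'': "\<And>x y. ((\<lambda>s. \<psi>' (x, s)) has_real_derivative \<psi>'' (x, y)) (at y)"
  shows "(\<integral>z. F z * (bump (c * fst z) * (bump'' (c * snd z) * c\<^sup>2 * \<psi> z
            + 2 * c * bump' (c * snd z) * \<psi>' z + bump (c * snd z) * \<psi>'' z)) \<partial>lborel)
       = (\<integral>z. G z * (bump (c * fst z) * (bump (c * snd z) * \<psi> z)) \<partial>lborel)"
proof -
  define \<phi> where "\<phi> z = bump (c * fst z) * (bump (c * snd z) * \<psi> z)" for z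
  define \<phi>' where "\<phi>' z = bump (c * fst z) * (bump (c * snd z) * \<psi>' z + c * bump' (c * snd z) * \<psi> z)" for z
  define \<phi>'' where "\<phi>'' z = bump (c * fst z) * (bump'' (c * snd z) * c\<^sup>2 * \<psi> z
            + 2 * c * bump' (c * snd z) * \<psi>' z + bump (c * snd z) * \<psi>'' z)" for z
  have "isCont \<psi> z" "isCont \<psi>' z" "isCont \<psi>'' z" for z
    using cont unfolding continuous_on_eq_continuous_at[OF open_UNIV] by blast+
  then have "continuous_on UNIV \<phi>" "continuous_on UNIV \<phi>'" "continuous_on UNIV \<phi>''"
    unfolding \<phi>_def \<phi>'_def \<phi>''_def
    by (auto intro!: continuous_intros continuous_at_imp_continuous_on
        isCont_o2[OF _ isCont_bump] isCont_o2[OF _ isCont_bump'] isCont_o2[OF _ isCont_bump''])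
  moreover have "bounded {z. \<phi> z \<noteq> 0}"
    unfolding \<phi>_def by (rule bounded_bump_cutoff_support[OF c])
  moreover have "((\<lambda>s. \<phi> (x, s)) has_real_derivative \<phi>' (x, y)) (at y)" for x y
    unfolding \<phi>_def \<phi>'_def fst_conv snd_conv by (intro DERIV_cmult DERIV_mult' has_real_derivative_bump_scaled \<psi>')
  moreover have "((\<lambda>s. \<phi>' (x, s)) has_real_derivative \<phi>'' (x, y)) (at y)" for x y
  proof -
    have "((\<lambda>s. \<phi>' (x, s)) has_real_derivative bump (c * x) *
        ((bump (c * y) * \<psi>'' (x, y) + c * bump' (c * y) * \<psi>' (x, y))
         + (c * bump' (c * y) * \<psi>' (x, y) + c * (c * bump'' (c * y)) * \<psi> (x, y)))) (at y)"
      unfolding \<phi>'_def fst_conv snd_conv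
      by (intro DERIV_cmult DERIV_add DERIV_mult' has_real_derivative_bump_scaled \<psi>' \<psi>'')
    then show ?thesis
      by (rule DERIV_cong) (simp add: \<phi>''_def algebra_simps power2_eq_square)
  qed
  ultimately show ?thesis
    using FG unfolding weak_dyy_def \<phi>_def[symmetric] \<phi>''_def[symmetric] by blast
qed

lemma integral_mult_tendsto_of_bounded:
  fixes F :: "'a \<Rightarrow> real"
  assumes F: "integrable M F" and h: "\<And>k. h k \<in> borel_measurable M"
    and bound: "\<And>k x. \<bar>h k x\<bar> \<le> K" and lim: "\<And>x. (\<lambda>k. h k x) \<longlonglongrightarrow> h' x"
  shows "(\<lambda>k. \<integral>x. F x * h k x \<partial>M) \<longlonglongrightarrow> (\<integral>x. F x * h' x \<partial>M)"
proof (rule integral_dominated_convergence[where w="\<lambda>x. \<bar>F x\<bar> * K"])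
  show "(\<lambda>x. F x * h' x) \<in> borel_measurable M"
    using F borel_measurable_LIMSEQ_real[OF lim h] by auto
  show "AE x in M. norm (F x * h k x) \<le> \<bar>F x\<bar> * K" for k
    using bound by (auto simp: abs_mult intro!: mult_left_mono)
qed (use F h lim in \<open>auto intro!: AE_I2 tendsto_mult_left\<close>)

lemma abs_bump_cutoff_second_derivative_le:
  assumes c: "0 < c" "c \<le> 1" and p: "\<bar>p\<bar> \<le> K" "\<bar>p'\<bar> \<le> K" "\<bar>p''\<bar> \<le> K"
  shows "\<bar>bump a * (bump'' b * c\<^sup>2 * p + 2 * c * bump' b * p' + bump b * p'')\<bar> \<le> 43 * K"
proof -
  have "\<bar>c\<bar> \<le> 1" "\<bar>c\<^sup>2\<bar> \<le> 1" using c by (simp_all add: power_le_one)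
  then have "\<bar>bump'' b * c\<^sup>2 * p\<bar> \<le> 30 * 1 * K" and "\<bar>2 * c * bump' b * p'\<bar> \<le> 2 * 1 * 6 * K"
    and "\<bar>bump b * p''\<bar> \<le> 1 * K"
    unfolding abs_mult using bump_bounds p by (intro mult_mono; simp)+
  then have sum: "\<bar>bump'' b * c\<^sup>2 * p + 2 * c * bump' b * p' + bump b * p''\<bar> \<le> 43 * K"
    unfolding abs_le_iff by linarith
  show ?thesis
    using mult_mono[OF bump_bounds(1)[of a] sum] by (simp add: abs_mult)
qed

lemma weak_dyy_bounded_test:
  fixes F G \<psi> \<psi>' \<psi>'' :: "real \<times> real \<Rightarrow> real"
  assumes F: "integrable lborel F" and G: "integrable lborel G" and FG: "weak_dyy F G"
    and cont: "continuous_on UNIV \<psi>" "continuous_on UNIV \<psi>'" "continuous_on UNIV \<psi>''"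
    and \<psi>': "\<And>x y. ((\<lambda>s. \<psi> (x, s)) has_real_derivative \<psi>' (x, y)) (at y)"
    and \<psi>'': "\<And>x y. ((\<lambda>s. \<psi>' (x, s)) has_real_derivative \<psi>'' (x, y)) (at y)"
    and bound: "\<And>z. \<bar>\<psi> z\<bar> \<le> K" "\<And>z. \<bar>\<psi>' z\<bar> \<le> K" "\<And>z. \<bar>\<psi>'' z\<bar> \<le> K"
  shows "(\<integral>z. F z * \<psi>'' z \<partial>lborel) = (\<integral>z. G z * \<psi> z \<partial>lborel)"
proof -
  define c :: "nat \<Rightarrow> real" where "c k = inverse (real (Suc k))" for k
  have c: "0 < c k" "c k \<le> 1" for k
    by (auto simp: c_def field_simps)
  have "c \<longlonglongrightarrow> 0" unfolding c_def by (rule LIMSEQ_inverse_real_of_nat)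
  have "(\<lambda>k. f (c k * x)) \<longlonglongrightarrow> f 0" if "isCont f 0" for f x
    using tendsto_mult_left_zero[OF \<open>c \<longlonglongrightarrow> 0\<close>] by (rule isCont_tendsto_compose[OF that])
  then have bump_lim: "(\<lambda>k. bump (c k * x)) \<longlonglongrightarrow> 1" "(\<lambda>k. bump' (c k * x)) \<longlonglongrightarrow> bump' 0"
    "(\<lambda>k. bump'' (c k * x)) \<longlonglongrightarrow> bump'' 0" for x
    using isCont_bump isCont_bump' isCont_bump'' by force+
  define \<phi> where "\<phi> k z = bump (c k * fst z) * (bump (c k * snd z) * \<psi> z)" for k z
  define \<phi>'' where "\<phi>'' k z = bump (c k * fst z) * (bump'' (c k * snd z) * (c k)\<^sup>2 * \<psi> z
      + 2 * c k * bump' (c k * snd z) * \<psi>' z + bump (c k * snd z) * \<psi>'' z)" for k z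
  have "isCont \<psi> z" "isCont \<psi>' z" "isCont \<psi>'' z" for z
    using cont unfolding continuous_on_eq_continuous_at[OF open_UNIV] by blast+
  then have measurable: "\<phi> k \<in> borel_measurable lborel" "\<phi>'' k \<in> borel_measurable lborel" for k
    unfolding \<phi>_def \<phi>''_def
    by (auto intro!: borel_measurable_continuous_onI continuous_intros continuous_at_imp_continuous_on
        isCont_o2[OF _ isCont_bump] isCont_o2[OF _ isCont_bump'] isCont_o2[OF _ isCont_bump''])
  have bound_\<phi>: "\<bar>\<phi> k z\<bar> \<le> 1 * (1 * K)" for k z
    unfolding \<phi>_def abs_mult using bump_bounds bound by (intro mult_mono) auto
  have bound_\<phi>'': "\<bar>\<phi>'' k z\<bar> \<le> 43 * K" for k z
    unfolding \<phi>''_def using c bound by (rule abs_bump_cutoff_second_derivative_le)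
  have lim: "(\<lambda>k. \<phi> k z) \<longlonglongrightarrow> \<psi> z" "(\<lambda>k. \<phi>'' k z) \<longlonglongrightarrow> \<psi>'' z" for z
  proof -
    have "(\<lambda>k. \<phi> k z) \<longlonglongrightarrow> 1 * (1 * \<psi> z)"
      unfolding \<phi>_def by (intro tendsto_mult tendsto_const bump_lim)
    then show "(\<lambda>k. \<phi> k z) \<longlonglongrightarrow> \<psi> z" by simp
    have "(\<lambda>k. \<phi>'' k z) \<longlonglongrightarrow> 1 * (bump'' 0 * 0\<^sup>2 * \<psi> z + 2 * 0 * bump' 0 * \<psi>' z + 1 * \<psi>'' z)"
      unfolding \<phi>''_def
      by (intro tendsto_mult tendsto_add tendsto_const tendsto_power bump_lim \<open>c \<longlonglongrightarrow> 0\<close>)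
    then show "(\<lambda>k. \<phi>'' k z) \<longlonglongrightarrow> \<psi>'' z" by simp
  qed
  have "(\<lambda>k. \<integral>z. F z * \<phi>'' k z \<partial>lborel) \<longlonglongrightarrow> (\<integral>z. F z * \<psi>'' z \<partial>lborel)"
    by (rule integral_mult_tendsto_of_bounded[OF F measurable(2) bound_\<phi>'' lim(2)])
  moreover have "(\<lambda>k. \<integral>z. G z * \<phi> k z \<partial>lborel) \<longlonglongrightarrow> (\<integral>z. G z * \<psi> z \<partial>lborel)"
    by (rule integral_mult_tendsto_of_bounded[OF G measurable(1) bound_\<phi> lim(1)])
  moreover have "(\<integral>z. F z * \<phi>'' k z \<partial>lborel) = (\<integral>z. G z * \<phi> k z \<partial>lborel)" for k
    unfolding \<phi>_def \<phi>''_def using weak_dyy_cutoff[OF FG c(1) cont \<psi>' \<psi>''] .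
  ultimately show ?thesis
    using LIMSEQ_unique by simp
qed

lemma L1norm_nonneg: "0 \<le> L1norm h"
  unfolding L1norm_def by simp

lemma integrable_mult_bounded:
  fixes F q :: "'a \<Rightarrow> real"
  assumes F: "integrable M F" and q: "q \<in> borel_measurable M" and bound: "\<And>z. \<bar>q z\<bar> \<le> K"
  shows "integrable M (\<lambda>z. F z * q z)"
proof (rule Bochner_Integration.integrable_bound)
  show "integrable M (\<lambda>z. \<bar>F z\<bar> * K)" using F by auto
  show "AE z in M. norm (F z * q z) \<le> norm (\<bar>F z\<bar> * K)"
    using bound order.trans[OF abs_ge_zero bound] by (auto simp: abs_mult intro!: mult_left_mono)
qed (use F q in auto)

lemma abs_integral_mult_le_L1norm:
  assumes F: "integrable lborel F" and q: "q \<in> borel_measurable lborel" and bound: "\<And>z. \<bar>q z\<bar> \<le> K"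
  shows "\<bar>\<integral>z. F z * q z \<partial>lborel\<bar> \<le> K * L1norm F"
proof -
  have "\<bar>\<integral>z. F z * q z \<partial>lborel\<bar> \<le> (\<integral>z. \<bar>F z * q z\<bar> \<partial>lborel)"
    using integral_norm_bound[of lborel "\<lambda>z. F z * q z"] by simp
  also have "\<dots> \<le> (\<integral>z. \<bar>F z\<bar> * K \<partial>lborel)"
    using integrable_abs[OF integrable_mult_bounded[OF F q bound]] F bound
    by (intro integral_mono) (auto simp: abs_mult intro!: mult_left_mono)
  also have "\<dots> = K * L1norm F"
    unfolding L1norm_def by simp
  finally show ?thesis .
qed

lemma product_test_integral:
  fixes F :: "real \<times> real \<Rightarrow> real" and p f :: "real \<Rightarrow> real"
  assumes F: "integrable lborel F" and p: "continuous_on UNIV p" "\<And>x. \<bar>p x\<bar> \<le> 1"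
    and f: "continuous_on UNIV f" "\<And>v. \<bar>f v\<bar> \<le> C"
  shows "integrable lborel (\<lambda>z. F z * (p (fst z) * f (snd z - y\<^sub>0)))"
    and "\<bar>\<integral>z. F z * (p (fst z) * f (snd z - y\<^sub>0)) \<partial>lborel\<bar> \<le> C * L1norm F"
proof -
  have "continuous_on UNIV (\<lambda>z. p (fst z) * f (snd z - y\<^sub>0))"
    by (intro continuous_intros continuous_on_compose2[OF p(1)] continuous_on_compose2[OF f(1)]) auto
  then have "(\<lambda>z. p (fst z) * f (snd z - y\<^sub>0)) \<in> borel_measurable lborel"
    by (simp add: borel_measurable_continuous_onI)
  moreover have "\<bar>p (fst z) * f (snd z - y\<^sub>0)\<bar> \<le> C" for z
    using mult_mono[OF p(2) f(2)] by (simp add: abs_mult)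
  ultimately show "integrable lborel (\<lambda>z. F z * (p (fst z) * f (snd z - y\<^sub>0)))"
    and "\<bar>\<integral>z. F z * (p (fst z) * f (snd z - y\<^sub>0)) \<partial>lborel\<bar> \<le> C * L1norm F"
    by (rule integrable_mult_bounded[OF F], rule abs_integral_mult_le_L1norm[OF F])
qed

lemma weak_dyy_product_test:
  fixes F G :: "real \<times> real \<Rightarrow> real" and p Q Q' q :: "real \<Rightarrow> real"
  assumes F: "integrable lborel F" and G: "integrable lborel G" and FG: "weak_dyy F G"
    and p: "continuous_on UNIV p" "\<And>x. \<bar>p x\<bar> \<le> 1"
    and Q: "\<And>v. (Q has_real_derivative Q' v) (at v)" and Q': "\<And>v. (Q' has_real_derivative q v) (at v)"
    and q: "continuous_on UNIV q"
    and bounds: "\<And>v. \<bar>Q v\<bar> \<le> K" "\<And>v. \<bar>Q' v\<bar> \<le> K" "\<And>v. \<bar>q v\<bar> \<le> K"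
  shows "(\<integral>z. F z * (p (fst z) * q (snd z - y\<^sub>0)) \<partial>lborel) = (\<integral>z. G z * (p (fst z) * Q (snd z - y\<^sub>0)) \<partial>lborel)"
proof (rule weak_dyy_bounded_test[OF F G FG, where \<psi>' = "\<lambda>z. p (fst z) * Q' (snd z - y\<^sub>0)"])
  have "continuous_on UNIV Q" "continuous_on UNIV Q'"
    using Q Q' by (auto intro: DERIV_continuous_on)
  then show "continuous_on UNIV (\<lambda>z. p (fst z) * Q (snd z - y\<^sub>0))"
    "continuous_on UNIV (\<lambda>z. p (fst z) * Q' (snd z - y\<^sub>0))"
    "continuous_on UNIV (\<lambda>z. p (fst z) * q (snd z - y\<^sub>0))"
    using p(1) q by (auto intro!: continuous_intros intro: continuous_on_compose2)
  have shifted: "((\<lambda>s. f (s - y\<^sub>0)) has_real_derivative f' (y - y\<^sub>0)) (at y)"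
    if "\<And>v. (f has_real_derivative f' v) (at v)" for f f' y
    using DERIV_chain2[OF that DERIV_diff[OF DERIV_ident DERIV_const]] by simp
  show "((\<lambda>s. p (fst (x, s)) * Q (snd (x, s) - y\<^sub>0)) has_real_derivative p (fst (x, y)) * Q' (snd (x, y) - y\<^sub>0)) (at y)"
    "((\<lambda>s. p (fst (x, s)) * Q' (snd (x, s) - y\<^sub>0)) has_real_derivative p (fst (x, y)) * q (snd (x, y) - y\<^sub>0)) (at y)"
    for x y
    unfolding fst_conv snd_conv by (intro DERIV_cmult shifted Q Q')+
  have "\<bar>p (fst z) * f (snd z - y\<^sub>0)\<bar> \<le> K" if "\<And>v. \<bar>f v\<bar> \<le> K" for f z
    using mult_mono[OF p(2) that] by (simp add: abs_mult)
  then show "\<bar>p (fst z) * Q (snd z - y\<^sub>0)\<bar> \<le> K" "\<bar>p (fst z) * Q' (snd z - y\<^sub>0)\<bar> \<le> K"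
    "\<bar>p (fst z) * q (snd z - y\<^sub>0)\<bar> \<le> K" for z
    using bounds by blast+
qed

lemma weak_dyy_integral_bound_by_oscillation:
  fixes F G :: "real \<times> real \<Rightarrow> real" and p b B :: "real \<Rightarrow> real"
  assumes F: "integrable lborel F" and G: "integrable lborel G" and FG: "weak_dyy F G"
    and p: "continuous_on UNIV p" "\<And>x. \<bar>p x\<bar> \<le> 1"
    and b: "continuous_on UNIV b" "\<And>v. \<bar>b v\<bar> \<le> 1"
    and B: "\<And>v. (B has_real_derivative b v) (at v)" and osc: "\<And>u v. \<bar>B v - B u\<bar> \<le> K"
  shows "\<bar>\<integral>z. F z * (p (fst z) * b (snd z - y\<^sub>0)) \<partial>lborel\<bar> \<le> K * (L1norm F + L1norm G)"
proof -
  obtain Q Q' R where Q: "\<And>v. (Q has_real_derivative Q' v) (at v)"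
    and Q': "\<And>v. (Q' has_real_derivative b v - R v) (at v)" and R: "continuous_on UNIV R"
    and bounds: "\<And>v. \<bar>Q v\<bar> \<le> K" "\<And>v. \<bar>Q' v\<bar> \<le> K" "\<And>v. \<bar>R v\<bar> \<le> K"
    using double_antiderivative_of_bounded_oscillation[OF B osc] by blast
  have Q_cont: "continuous_on UNIV Q"
    using Q by (auto intro: DERIV_continuous_on)
  have b_R: "continuous_on UNIV (\<lambda>v. b v - R v)"
    using b(1) R by (rule continuous_on_diff)
  have b_R_bound: "\<bar>b v - R v\<bar> \<le> K + 1" for v
    using b(2)[of v] bounds(3)[of v] by (simp add: abs_le_iff)
  \<comment> \<open>Since \<open>Q'' = b - R\<close>, the weak derivative moves the integral against \<open>b - R\<close> from \<open>F\<close> to \<open>G\<close>.\<close>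
  have "(\<integral>z. F z * (p (fst z) * (b (snd z - y\<^sub>0) - R (snd z - y\<^sub>0))) \<partial>lborel)
      = (\<integral>z. G z * (p (fst z) * Q (snd z - y\<^sub>0)) \<partial>lborel)"
  proof (rule weak_dyy_product_test[OF F G FG p Q Q' b_R])
    show "\<bar>Q v\<bar> \<le> K + 1" "\<bar>Q' v\<bar> \<le> K + 1" for v
      using bounds(1,2)[of v] by simp_all
  qed (rule b_R_bound)
  moreover have "(\<lambda>z. F z * (p (fst z) * b (snd z - y\<^sub>0)))
      = (\<lambda>z. F z * (p (fst z) * (b (snd z - y\<^sub>0) - R (snd z - y\<^sub>0))) + F z * (p (fst z) * R (snd z - y\<^sub>0)))"
    by (auto simp: algebra_simps)
  ultimately have "(\<integral>z. F z * (p (fst z) * b (snd z - y\<^sub>0)) \<partial>lborel)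
      = (\<integral>z. G z * (p (fst z) * Q (snd z - y\<^sub>0)) \<partial>lborel) + (\<integral>z. F z * (p (fst z) * R (snd z - y\<^sub>0)) \<partial>lborel)"
    using product_test_integral(1)[OF F p b_R b_R_bound] product_test_integral(1)[OF F p R bounds(3)] by simp
  moreover have "\<bar>\<integral>z. G z * (p (fst z) * Q (snd z - y\<^sub>0)) \<partial>lborel\<bar> \<le> K * L1norm G"
    by (rule product_test_integral(2)[OF G p Q_cont bounds(1)])
  moreover have "\<bar>\<integral>z. F z * (p (fst z) * R (snd z - y\<^sub>0)) \<partial>lborel\<bar> \<le> K * L1norm F"
    by (rule product_test_integral(2)[OF F p R bounds(3)])
  ultimately show ?thesis
    by (simp add: distrib_left abs_le_iff)
qed

lemma weak_dyy_chirp_integral_bound: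
  fixes F G :: "real \<times> real \<Rightarrow> real" and p :: "real \<Rightarrow> real"
  assumes F: "integrable lborel F" and G: "integrable lborel G" and FG: "weak_dyy F G"
    and l: "l > 0" and p: "continuous_on UNIV p" "\<And>x. \<bar>p x\<bar> \<le> 1"
  shows "\<bar>\<integral>z. F z * (p (fst z) * cos (l * (snd z - y\<^sub>0)\<^sup>2 + \<theta>)) \<partial>lborel\<bar>
    \<le> 5 / sqrt l * (L1norm F + L1norm G)"
proof -
  have "isCont (\<lambda>v. cos (l * v\<^sup>2 + \<theta>)) v" for v
    by (intro continuous_intros)
  then obtain B where B: "\<And>v. (B has_real_derivative cos (l * v\<^sup>2 + \<theta>)) (at v)"
    using isCont_obtain_antiderivative by blast
  show ?thesis
    by (rule weak_dyy_integral_bound_by_oscillation[OF F G FG p _ _ B chirp_antiderivative_oscillation[OF l B]])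
      (auto intro!: continuous_intros)
qed

lemma weak_dyy_phase_integral_bound:
  fixes F G :: "real \<times> real \<Rightarrow> real"
  assumes F: "integrable lborel F" and G: "integrable lborel G" and FG: "weak_dyy F G" and "\<beta> \<noteq> 0"
  shows "\<bar>\<integral>z. F z * cos (\<alpha> * (x - fst z) + \<beta> * (y - snd z)\<^sup>2 + \<gamma>) \<partial>lborel\<bar>
    \<le> 10 / sqrt \<bar>\<beta>\<bar> * (L1norm F + L1norm G)"
proof -
  define l where "l = \<bar>\<beta>\<bar>"
  have l: "l > 0" using \<open>\<beta> \<noteq> 0\<close> by (simp add: l_def)
  define p\<^sub>1 where "p\<^sub>1 w = cos (\<alpha> * (x - w) + \<gamma>)" for w
  define p\<^sub>2 where "p\<^sub>2 w = - (sgn \<beta> * sin (\<alpha> * (x - w) + \<gamma>))" for w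
  define I where "I p \<theta> = (\<integral>z. F z * (p (fst z) * cos (l * (snd z - y)\<^sup>2 + \<theta>)) \<partial>lborel)" for p \<theta>
  have p: "continuous_on UNIV p\<^sub>1" "\<And>w. \<bar>p\<^sub>1 w\<bar> \<le> 1" "continuous_on UNIV p\<^sub>2" "\<And>w. \<bar>p\<^sub>2 w\<bar> \<le> 1"
    unfolding p\<^sub>1_def p\<^sub>2_def by (auto intro!: continuous_intros simp: abs_mult abs_sgn_eq)
  have split: "cos (\<alpha> * (x - fst z) + \<beta> * (y - snd z)\<^sup>2 + \<gamma>)
      = p\<^sub>1 (fst z) * cos (l * (snd z - y)\<^sup>2 + 0) + p\<^sub>2 (fst z) * cos (l * (snd z - y)\<^sup>2 + - (pi / 2))" for z
  proof -
    have "cos (\<beta> * (y - snd z)\<^sup>2) = cos (l * (snd z - y)\<^sup>2)"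
      and "sin (\<beta> * (y - snd z)\<^sup>2) = sgn \<beta> * cos (l * (snd z - y)\<^sup>2 + - (pi / 2))"
      using \<open>\<beta> \<noteq> 0\<close> by (auto simp: l_def abs_if sgn_if power2_commute cos_diff)
    then show ?thesis
      using cos_add[of "\<alpha> * (x - fst z) + \<gamma>" "\<beta> * (y - snd z)\<^sup>2"]
      by (simp add: p\<^sub>1_def p\<^sub>2_def algebra_simps)
  qed
  have chirp: "continuous_on UNIV (\<lambda>v. cos (l * v\<^sup>2 + \<theta>))" "\<And>v. \<bar>cos (l * v\<^sup>2 + \<theta>)\<bar> \<le> 1" for \<theta>
    by (auto intro!: continuous_intros)
  have sum: "(\<integral>z. F z * cos (\<alpha> * (x - fst z) + \<beta> * (y - snd z)\<^sup>2 + \<gamma>) \<partial>lborel)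
      = I p\<^sub>1 0 + I p\<^sub>2 (- (pi / 2))"
    unfolding I_def split distrib_left
    by (rule Bochner_Integration.integral_add[OF product_test_integral(1)[OF F p(1,2) chirp]
          product_test_integral(1)[OF F p(3,4) chirp]])
  have "\<bar>I p\<^sub>1 0\<bar> \<le> 5 / sqrt l * (L1norm F + L1norm G)"
    and "\<bar>I p\<^sub>2 (- (pi / 2))\<bar> \<le> 5 / sqrt l * (L1norm F + L1norm G)"
    unfolding I_def using p by (blast intro: weak_dyy_chirp_integral_bound[OF F G FG l])+
  then have "\<bar>\<integral>z. F z * cos (\<alpha> * (x - fst z) + \<beta> * (y - snd z)\<^sup>2 + \<gamma>) \<partial>lborel\<bar>
      \<le> 5 / sqrt l * (L1norm F + L1norm G) + 5 / sqrt l * (L1norm F + L1norm G)"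
    unfolding sum by (rule order_trans[OF abs_triangle_ineq add_mono])
  then show ?thesis
    by (simp add: l_def field_simps)
qed

lemma abs_integral_le_of_nn_integral_le:
  fixes h :: "'a \<Rightarrow> real"
  assumes "(\<integral>\<^sup>+x. ennreal \<bar>h x\<bar> \<partial>M) \<le> ennreal X" and "0 \<le> X"
  shows "\<bar>integral\<^sup>L M h\<bar> \<le> X"
proof (cases "integrable M h")
  case True
  then have "ennreal \<bar>integral\<^sup>L M h\<bar> \<le> ennreal X"
    using integral_norm_bound_ennreal[of M h] assms(1) by simp
  then show ?thesis using \<open>0 \<le> X\<close> by simp
qed (simp add: not_integrable_integral_eq \<open>0 \<le> X\<close>)

lemma integrable_product_mult:
  fixes f :: "'a \<Rightarrow> real" and g :: "'b \<Rightarrow> real"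
  assumes M2: "sigma_finite_measure M2" and f: "integrable M1 f" and g: "integrable M2 g"
  shows "integrable (M1 \<Otimes>\<^sub>M M2) (\<lambda>(x, y). f x * g y)"
proof (rule integrableI_bounded)
  have [measurable]: "f \<in> borel_measurable M1" "g \<in> borel_measurable M2" using f g by auto
  show "(\<lambda>(x, y). f x * g y) \<in> borel_measurable (M1 \<Otimes>\<^sub>M M2)" by measurable
  have "(\<integral>\<^sup>+z. ennreal (norm ((\<lambda>(x, y). f x * g y) z)) \<partial>(M1 \<Otimes>\<^sub>M M2))
      = (\<integral>\<^sup>+x. \<integral>\<^sup>+y. ennreal \<bar>f x\<bar> * ennreal \<bar>g y\<bar> \<partial>M2 \<partial>M1)"
    by (subst sigma_finite_measure.nn_integral_fst[OF M2, symmetric]) (auto simp: abs_mult ennreal_mult)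
  also have "\<dots> = (\<integral>\<^sup>+x. ennreal \<bar>f x\<bar> \<partial>M1) * (\<integral>\<^sup>+y. ennreal \<bar>g y\<bar> \<partial>M2)"
    by (simp add: nn_integral_cmult nn_integral_multc)
  also have "\<dots> < \<infinity>"
    using f g unfolding integrable_iff_bounded by (simp add: ennreal_mult_less_top)
  finally show "(\<integral>\<^sup>+z. ennreal (norm ((\<lambda>(x, y). f x * g y) z)) \<partial>(M1 \<Otimes>\<^sub>M M2)) < \<infinity>" .
qed

lemma integral_set_integral_swap:
  fixes F :: "real \<times> real \<Rightarrow> real" and W :: "real \<Rightarrow> real" and k :: "real \<Rightarrow> real \<times> real \<Rightarrow> real"
  assumes F: "integrable lborel F" and W: "integrable lborel (\<lambda>r. indicator A r * W r)"
    and k: "(\<lambda>(r, w). k r w) \<in> borel_measurable (lborel \<Otimes>\<^sub>M lborel)" and bound: "\<And>r w. \<bar>k r w\<bar> \<le> 1"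
  shows "(\<integral>w. F w * (LBINT r:A. W r * k r w) \<partial>lborel) = (LBINT r:A. W r * (\<integral>w. F w * k r w \<partial>lborel))"
proof -
  define H where "H r w = indicator A r * W r * k r w * F w" for r w
  have "integrable (lborel \<Otimes>\<^sub>M lborel) (\<lambda>(r, w). H r w)"
  proof (rule Bochner_Integration.integrable_bound[OF integrable_product_mult[OF sigma_finite_lborel W F]])
    have [measurable]: "(\<lambda>(r, w). k r w) \<in> borel_measurable (lborel \<Otimes>\<^sub>M lborel)"
      "(\<lambda>r. indicator A r * W r) \<in> borel_measurable lborel" "F \<in> borel_measurable lborel"
      using k W F by auto
    show "(\<lambda>(r, w). H r w) \<in> borel_measurable (lborel \<Otimes>\<^sub>M lborel)"
      unfolding H_def by measurable
    show "AE z in lborel \<Otimes>\<^sub>M lborel. norm ((\<lambda>(r, w). H r w) z) \<le> norm ((\<lambda>(r, w). indicator A r * W r * F w) z)"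
      using bound by (intro AE_I2) (auto simp: H_def abs_mult mult.assoc intro!: mult_left_mono mult_left_le_one_le)
  qed
  then have "(\<integral>w. (\<integral>r. H r w \<partial>lborel) \<partial>lborel) = (\<integral>r. (\<integral>w. H r w \<partial>lborel) \<partial>lborel)"
    by (rule lborel_pair.Fubini_integral)
  moreover have "(\<integral>r. H r w \<partial>lborel) = F w * (LBINT r:A. W r * k r w)" for w
  proof -
    have "H r w = F w * (indicator A r * (W r * k r w))" for r
      by (simp add: H_def mult_ac)
    then show ?thesis by (simp add: set_lebesgue_integral_def)
  qed
  moreover have "(\<integral>w. H r w \<partial>lborel) = indicator A r * (W r * (\<integral>w. F w * k r w \<partial>lborel))" for r
  proof -
    have "H r w = (indicator A r * W r) * (F w * k r w)" for w
      by (simp add: H_def mult_ac)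
    then show ?thesis by (simp add: mult.assoc)
  qed
  ultimately show ?thesis
    unfolding set_lebesgue_integral_def by simp
qed

lemma chirp_superposition_convolution_bound:
  fixes F G :: "real \<times> real \<Rightarrow> real" and W \<alpha> \<beta> \<gamma> :: "real \<Rightarrow> real"
  assumes F: "integrable lborel F" and G: "integrable lborel G" and FG: "weak_dyy F G"
    and [measurable]: "W \<in> borel_measurable borel" "\<alpha> \<in> borel_measurable borel"
      "\<beta> \<in> borel_measurable borel" "\<gamma> \<in> borel_measurable borel"
    and \<beta>: "\<And>r. 0 < r \<Longrightarrow> \<beta> r \<noteq> 0"
    and W: "integrable lborel (\<lambda>r. indicator {0<..} r * W r)"
    and majorant: "(\<integral>\<^sup>+r. ennreal (indicator {0<..} r * (\<bar>W r\<bar> / sqrt \<bar>\<beta> r\<bar>)) \<partial>lborel) \<le> ennreal I"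
    and "0 \<le> I"
  shows "\<bar>\<integral>w. F w * (LBINT r:{0<..}. W r * cos (\<alpha> r * (x - fst w) + \<beta> r * (y - snd w)\<^sup>2 + \<gamma> r)) \<partial>lborel\<bar>
    \<le> 10 * I * (L1norm F + L1norm G)"
proof -
  define M where "M = L1norm F + L1norm G"
  have "0 \<le> M" by (simp add: M_def L1norm_nonneg)
  define J where "J r = (\<integral>w. F w * cos (\<alpha> r * (x - fst w) + \<beta> r * (y - snd w)\<^sup>2 + \<gamma> r) \<partial>lborel)" for r
  have [measurable]: "(\<lambda>w. fst w) \<in> borel_measurable (lborel :: (real \<times> real) measure)"
    "(\<lambda>w. snd w) \<in> borel_measurable (lborel :: (real \<times> real) measure)"
    by (simp_all add: borel_measurable_continuous_onI continuous_on_fst continuous_on_snd)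
  have "(\<lambda>(r, w). cos (\<alpha> r * (x - fst w) + \<beta> r * (y - snd w)\<^sup>2 + \<gamma> r))
      \<in> borel_measurable (lborel \<Otimes>\<^sub>M (lborel :: (real \<times> real) measure))"
    by measurable
  then have swap: "(\<integral>w. F w * (LBINT r:{0<..}. W r * cos (\<alpha> r * (x - fst w) + \<beta> r * (y - snd w)\<^sup>2 + \<gamma> r)) \<partial>lborel)
      = (LBINT r:{0<..}. W r * J r)"
    unfolding J_def by (rule integral_set_integral_swap[OF F W]) simp
  have "\<bar>indicator {0<..} r * (W r * J r)\<bar> \<le> 10 * M * (indicator {0<..} r * (\<bar>W r\<bar> / sqrt \<bar>\<beta> r\<bar>))" for r
  proof (cases "0 < r")
    case True
    have "\<bar>W r * J r\<bar> \<le> \<bar>W r\<bar> * (10 / sqrt \<bar>\<beta> r\<bar> * M)"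
      unfolding J_def M_def abs_mult
      by (intro mult_left_mono weak_dyy_phase_integral_bound[OF F G FG \<beta>[OF True]]) simp
    then show ?thesis using True by (simp add: mult_ac)
  qed simp
  then have "(\<integral>\<^sup>+r. ennreal \<bar>indicator {0<..} r * (W r * J r)\<bar> \<partial>lborel)
      \<le> (\<integral>\<^sup>+r. ennreal (10 * M) * ennreal (indicator {0<..} r * (\<bar>W r\<bar> / sqrt \<bar>\<beta> r\<bar>)) \<partial>lborel)"
    using \<open>0 \<le> M\<close> by (intro nn_integral_mono) (simp add: ennreal_mult[symmetric])
  also have "\<dots> = ennreal (10 * M) * (\<integral>\<^sup>+r. ennreal (indicator {0<..} r * (\<bar>W r\<bar> / sqrt \<bar>\<beta> r\<bar>)) \<partial>lborel)"
    by (rule nn_integral_cmult) measurable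
  also have "\<dots> \<le> ennreal (10 * I * M)"
    using mult_left_mono[OF majorant, of "ennreal (10 * M)"] \<open>0 \<le> M\<close> \<open>0 \<le> I\<close>
    by (simp add: ennreal_mult[symmetric] mult_ac)
  finally have "\<bar>LBINT r:{0<..}. W r * J r\<bar> \<le> 10 * I * M"
    unfolding set_lebesgue_integral_def real_scaleR_def
    by (rule abs_integral_le_of_nn_integral_le) (simp add: \<open>0 \<le> M\<close> \<open>0 \<le> I\<close>)
  then show ?thesis
    unfolding swap M_def .
qed

definition kernel_Linf_estimate :: "(real \<Rightarrow> real \<Rightarrow> real \<Rightarrow> real) \<Rightarrow> real \<Rightarrow> bool" where
  "kernel_Linf_estimate Ker C \<longleftrightarrow> (\<forall>s>0. \<forall>F G x y. integrable lborel F \<longrightarrow> integrable lborel G \<longrightarrow>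
     weak_dyy F G \<longrightarrow>
     \<bar>\<integral>w. Ker (x - fst w) (y - snd w) s * F w \<partial>lborel\<bar> \<le> C / sqrt s * (L1norm F + L1norm G))"

lemma kernel_Linf_estimateD:
  assumes "kernel_Linf_estimate Ker C" and "0 < s" and "integrable lborel F" and "integrable lborel G"
    and "weak_dyy F G"
  shows "\<bar>\<integral>w. Ker (x - fst w) (y - snd w) s * F w \<partial>lborel\<bar> \<le> C / sqrt s * (L1norm F + L1norm G)"
  using assms unfolding kernel_Linf_estimate_def by blast

lemma gaussian_halfline_scaled:
  fixes c :: real
  assumes c: "0 < c"
  shows "has_bochner_integral lborel (\<lambda>x. indicator {0..} x * exp (- c * x\<^sup>2)) (sqrt pi / (2 * sqrt c))"
    and "integrable lborel (\<lambda>x. indicator {0..} x * (exp (- c * x\<^sup>2) * x))"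
proof -
  have sc: "0 < sqrt c" using c by simp
  have scale: "indicator {0..} (sqrt c * x) = (indicator {0..} x :: real)" "(sqrt c * x)\<^sup>2 = c * x\<^sup>2" for x
    using sc c by (auto simp: indicator_def zero_le_mult_iff power_mult_distrib)
  have "sqrt c \<noteq> 0" using sc by simp
  note affine = lborel_has_bochner_integral_real_affine_iff[OF this, where t=0, THEN iffD1]
  have "has_bochner_integral lborel (\<lambda>x. indicator {0..} x * exp (- c * x\<^sup>2)) (inverse \<bar>sqrt c\<bar> * sqrt pi / 2)"
    using affine[OF gaussian_moment_0] by (simp add: scale)
  moreover have "inverse \<bar>sqrt c\<bar> * sqrt pi / 2 = sqrt pi / (2 * sqrt c)"
    using sc by (simp add: field_simps)
  ultimately show "has_bochner_integral lborel (\<lambda>x. indicator {0..} x * exp (- c * x\<^sup>2)) (sqrt pi / (2 * sqrt c))"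
    by (simp only:)
  have "integrable lborel (\<lambda>x. indicator {0..} x * (exp (- c * x\<^sup>2) * (sqrt c * x)))"
    using affine[OF gaussian_moment_1] by (simp add: scale has_bochner_integral_iff)
  then have "integrable lborel (\<lambda>x. indicator {0..} x * (exp (- c * x\<^sup>2) * (sqrt c * x)) / sqrt c)"
    by (rule integrable_divide_zero)
  moreover have "indicator {0..} x * (exp (- c * x\<^sup>2) * (sqrt c * x)) / sqrt c
      = indicator {0..} x * (exp (- c * x\<^sup>2) * x)" for x :: real
    using sc by simp
  ultimately show "integrable lborel (\<lambda>x. indicator {0..} x * (exp (- c * x\<^sup>2) * x))"
    by simp
qed

lemma integrable_sqrt_gaussian_halfline:
  fixes c :: real
  assumes c: "0 < c"
  shows "integrable lborel (\<lambda>r. indicator {0<..} r * (sqrt r * exp (- c * r\<^sup>2)))"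
proof (rule Bochner_Integration.integrable_bound[OF Bochner_Integration.integrable_add[OF
      gaussian_halfline_scaled(1)[OF c, THEN integrable.intros] gaussian_halfline_scaled(2)[OF c]]])
  show "(\<lambda>r. indicator {0<..} r * (sqrt r * exp (- c * r\<^sup>2))) \<in> borel_measurable lborel"
    by measurable
  have "sqrt r * exp (- c * r\<^sup>2) \<le> exp (- c * r\<^sup>2) + exp (- c * r\<^sup>2) * r" if "0 \<le> r" for r :: real
  proof -
    have "sqrt r \<le> 1 + r"
      using arith_geo_mean_sqrt[of 1 r] that by simp
    then have "sqrt r * exp (- c * r\<^sup>2) \<le> (1 + r) * exp (- c * r\<^sup>2)"
      by (rule mult_right_mono) simp
    then show ?thesis by (simp add: algebra_simps)
  qed
  then show "AE r in lborel. norm (indicator {0<..} r * (sqrt r * exp (- c * r\<^sup>2)))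
      \<le> norm (indicator {0..} r * exp (- c * r\<^sup>2) + indicator {0..} r * (exp (- c * r\<^sup>2) * r))"
    by (intro AE_I2) (auto simp: indicator_def abs_mult)
qed

lemma nn_integral_gaussian_halfline_le:
  fixes c :: real
  assumes c: "0 < c"
  shows "(\<integral>\<^sup>+r. ennreal (indicator {0<..} r * exp (- c * r\<^sup>2)) \<partial>lborel) \<le> ennreal (sqrt pi / (2 * sqrt c))"
proof -
  have "(\<integral>\<^sup>+r. ennreal (indicator {0<..} r * exp (- c * r\<^sup>2)) \<partial>lborel)
      \<le> (\<integral>\<^sup>+r. ennreal (indicator {0..} r * exp (- c * r\<^sup>2)) \<partial>lborel)"
    by (intro nn_integral_mono) (auto simp: indicator_def)
  also have "\<dots> = ennreal (sqrt pi / (2 * sqrt c))"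
    using gaussian_halfline_scaled(1)[OF c] by (simp add: nn_integral_eq_integral has_bochner_integral_iff)
  finally show ?thesis .
qed

lemma pi_powr_three_halves: "pi powr (3/2) = pi * sqrt pi"
proof -
  have "pi powr (3/2) = pi powr (1 + 1/2)" by simp
  also have "\<dots> = pi * sqrt pi" by (simp only: powr_add) (simp add: powr_half_sqrt)
  finally show ?thesis .
qed

lemma kernel_Linf_estimate_Sker:
  assumes eps: "eps = 1 \<or> eps = -1" and nu: "0 < nu"
  shows "kernel_Linf_estimate (Sker eps nu) (5 / (pi * sqrt nu))"
  unfolding kernel_Linf_estimate_def
proof (intro allI impI)
  fix s x y :: real and F G :: "real \<times> real \<Rightarrow> real"
  assume s: "0 < s" and F: "integrable lborel F" and G: "integrable lborel G" and FG: "weak_dyy F G"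
  define W where "W \<xi> = sqrt \<xi> * exp (- (nu * s) * \<xi>\<^sup>2)" for \<xi>
  define \<beta> where "\<beta> \<xi> = \<xi> / (4 * eps * s)" for \<xi>
  define P where "P = 1 / (2 * pi powr (3/2) * sqrt s)"
  have c: "0 < nu * s" using nu s by simp
  have "(\<integral>w. Sker eps nu (x - fst w) (y - snd w) s * F w \<partial>lborel)
      = (\<integral>w. P * (F w * (LBINT \<xi>:{0<..}. W \<xi> *
          cos (\<xi> * (x - fst w) + \<beta> \<xi> * (y - snd w)\<^sup>2 + (s * \<xi> ^ 3 - pi / 4 * eps)))) \<partial>lborel)"
    by (rule Bochner_Integration.integral_cong[OF refl]) (simp add: Sker_def P_def W_def \<beta>_def algebra_simps)
  then have "\<bar>\<integral>w. Sker eps nu (x - fst w) (y - snd w) s * F w \<partial>lborel\<bar>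
      = \<bar>P\<bar> * \<bar>\<integral>w. F w * (LBINT \<xi>:{0<..}. W \<xi> *
          cos (\<xi> * (x - fst w) + \<beta> \<xi> * (y - snd w)\<^sup>2 + (s * \<xi> ^ 3 - pi / 4 * eps))) \<partial>lborel\<bar>"
    by (simp add: abs_mult)
  also have "\<dots> \<le> \<bar>P\<bar> * (10 * sqrt (pi / nu) * (L1norm F + L1norm G))"
  proof (intro mult_left_mono chirp_superposition_convolution_bound[OF F G FG])
    show "W \<in> borel_measurable borel" "\<beta> \<in> borel_measurable borel"
      unfolding W_def \<beta>_def by measurable
    show "\<beta> r \<noteq> 0" if "0 < r" for r
      using that eps s by (auto simp: \<beta>_def)
    show "integrable lborel (\<lambda>r. indicator {0<..} r * W r)"
      unfolding W_def by (rule integrable_sqrt_gaussian_halfline[OF c])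
    have "indicator {0<..} r * (\<bar>W r\<bar> / sqrt \<bar>\<beta> r\<bar>) = 2 * sqrt s * (indicator {0<..} r * exp (- (nu * s) * r\<^sup>2))"
      for r
      using s eps by (cases "0 < r") (auto simp: W_def \<beta>_def abs_mult real_sqrt_divide real_sqrt_mult)
    then have "(\<integral>\<^sup>+r. ennreal (indicator {0<..} r * (\<bar>W r\<bar> / sqrt \<bar>\<beta> r\<bar>)) \<partial>lborel)
        = ennreal (2 * sqrt s) * (\<integral>\<^sup>+r. ennreal (indicator {0<..} r * exp (- (nu * s) * r\<^sup>2)) \<partial>lborel)"
      using s by (simp add: nn_integral_cmult ennreal_mult)
    also have "\<dots> \<le> ennreal (2 * sqrt s) * ennreal (sqrt pi / (2 * sqrt (nu * s)))"
      by (intro mult_left_mono nn_integral_gaussian_halfline_le[OF c]) simp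
    also have "\<dots> = ennreal (sqrt (pi / nu))"
      using s nu by (simp add: ennreal_mult[symmetric] real_sqrt_mult real_sqrt_divide field_simps)
    finally show "(\<integral>\<^sup>+r. ennreal (indicator {0<..} r * (\<bar>W r\<bar> / sqrt \<bar>\<beta> r\<bar>)) \<partial>lborel)
        \<le> ennreal (sqrt (pi / nu))" .
  qed (use nu in \<open>auto intro: borel_measurable_continuous_onI continuous_intros\<close>)
  also have "\<dots> = 5 / (pi * sqrt nu) / sqrt s * (L1norm F + L1norm G)"
    using s nu by (simp add: P_def pi_powr_three_halves real_sqrt_divide field_simps)
  finally show "\<bar>\<integral>w. Sker eps nu (x - fst w) (y - snd w) s * F w \<partial>lborel\<bar>
      \<le> 5 / (pi * sqrt nu) / sqrt s * (L1norm F + L1norm G)" .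
qed

lemma Gamma_halfline_integral:
  assumes a: "0 < a"
  shows "(\<integral>\<^sup>+r. ennreal (indicator {0<..} r * (r powr (a - 1) * exp (- r))) \<partial>lborel) = ennreal (Gamma a)"
    and "integrable lborel (\<lambda>r. indicator {0<..} r * (r powr (a - 1) * exp (- r)))"
proof -
  have "(\<integral>\<^sup>+r. ennreal (r powr (a - 1) / exp r) * indicator {0..} r \<partial>lborel) = ennreal (Gamma a)"
    by (rule nn_integral_has_integral_lebesgue'[OF _ Gamma_integral_real[OF a]]) simp
  moreover have "ennreal (r powr (a - 1) / exp r) * indicator {0..} r
      = ennreal (indicator {0<..} r * (r powr (a - 1) * exp (- r)))" for r :: real
    by (cases "0 < r") (auto simp: indicator_def exp_minus field_simps)
  ultimately show nn: "(\<integral>\<^sup>+r. ennreal (indicator {0<..} r * (r powr (a - 1) * exp (- r))) \<partial>lborel)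
      = ennreal (Gamma a)"
    by simp
  show "integrable lborel (\<lambda>r. indicator {0<..} r * (r powr (a - 1) * exp (- r)))"
    by (rule integrableI_nonneg) (auto simp: nn)
qed

lemma powr_quarter_power: "0 < x \<Longrightarrow> x powr (real k / 4) = (x powr (1/4)) ^ k"
  by (simp add: powr_power)

lemma Kstar_majorant_eq:
  assumes s: "0 < s" and nu: "0 < nu" and r: "0 < r" and eps: "\<bar>eps\<bar> = 1"
  shows "r powr - (1/4) * exp (- r) / sqrt \<bar>(s powr - (3/4))\<^sup>2 / (4 * eps) * sqrt (r / nu)\<bar>
    = 2 * s powr (3/4) * nu powr (1/4) * (r powr - (1/2) * exp (- r))"
proof -
  define \<sigma> n \<rho> where "\<sigma> = s powr (1/4)" and "n = nu powr (1/4)" and "\<rho> = r powr (1/4)"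
  have pos: "0 < \<sigma>" "0 < n" "0 < \<rho>" using s nu r by (simp_all add: \<sigma>_def n_def \<rho>_def)
  have s_powr: "s powr - (3/4) = 1 / \<sigma> ^ 3" "s powr (3/4) = \<sigma> ^ 3"
    using powr_quarter_power[OF s, of 3] by (simp_all add: \<sigma>_def powr_minus_divide)
  have r_powr: "r powr - (1/4) = 1 / \<rho>" "r powr - (1/2) = 1 / \<rho> ^ 2"
    using powr_quarter_power[OF r, of 2] by (simp_all add: \<rho>_def powr_minus_divide)
  have sqrt_r_nu: "sqrt (r / nu) = \<rho> ^ 2 / n ^ 2"
    using powr_quarter_power[OF r, of 2] powr_quarter_power[OF nu, of 2] r nu
    by (simp add: \<rho>_def n_def powr_half_sqrt[symmetric] powr_divide)
  have square: "\<bar>(1 / \<sigma> ^ 3)\<^sup>2 / (4 * eps) * (\<rho> ^ 2 / n ^ 2)\<bar> = (\<rho> / (2 * \<sigma> ^ 3 * n))\<^sup>2"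
    using pos eps by (simp add: abs_mult power2_eq_square field_simps)
  show ?thesis
    unfolding s_powr r_powr sqrt_r_nu square real_sqrt_abs n_def[symmetric]
    using pos by (simp add: field_simps power2_eq_square)
qed

lemma nn_integral_Kstar_majorant:
  assumes s: "0 < s" and nu: "0 < nu" and eps: "\<bar>eps\<bar> = 1"
  shows "(\<integral>\<^sup>+r. ennreal (indicator {0<..} r * (\<bar>r powr (-1/4) * exp (- r)\<bar>
      / sqrt \<bar>(s powr (-3/4))\<^sup>2 / (4 * eps) * sqrt (r / nu)\<bar>)) \<partial>lborel)
    = ennreal (2 * s powr (3/4) * nu powr (1/4) * sqrt pi)"
proof -
  define A where "A = 2 * s powr (3/4) * nu powr (1/4)"
  have "indicator {0<..} r * (\<bar>r powr (-1/4) * exp (- r)\<bar> / sqrt \<bar>(s powr (-3/4))\<^sup>2 / (4 * eps) * sqrt (r / nu)\<bar>)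
      = A * (indicator {0<..} r * (r powr (1/2 - 1) * exp (- r)))" for r
    using Kstar_majorant_eq[OF s nu, of r eps] eps by (cases "0 < r") (auto simp: A_def)
  then have "(\<integral>\<^sup>+r. ennreal (indicator {0<..} r * (\<bar>r powr (-1/4) * exp (- r)\<bar>
      / sqrt \<bar>(s powr (-3/4))\<^sup>2 / (4 * eps) * sqrt (r / nu)\<bar>)) \<partial>lborel)
      = (\<integral>\<^sup>+r. ennreal A * ennreal (indicator {0<..} r * (r powr (1/2 - 1) * exp (- r))) \<partial>lborel)"
    using s nu by (intro nn_integral_cong) (simp add: A_def ennreal_mult)
  also have "\<dots> = ennreal A * ennreal (Gamma (1/2))"
    using Gamma_halfline_integral(1)[of "1/2"] by (simp add: nn_integral_cmult)
  finally show ?thesis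
    using s nu by (simp add: A_def Gamma_one_half_real ennreal_mult)
qed

lemma Kker_scaling_constant:
  assumes s: "0 < s" and nu: "0 < nu"
  shows "s powr - (5/4) / (4 * pi powr (3/2) * nu powr (3/4)) * (10 * (2 * s powr (3/4) * nu powr (1/4) * sqrt pi))
    = 5 / (pi * sqrt nu) / sqrt s"
proof -
  define \<sigma> n where "\<sigma> = s powr (1/4)" and "n = nu powr (1/4)"
  have pos: "0 < \<sigma>" "0 < n" using s nu by (simp_all add: \<sigma>_def n_def)
  have powers: "s powr - (5/4) = 1 / \<sigma> ^ 5" "s powr (3/4) = \<sigma> ^ 3" "sqrt s = \<sigma> ^ 2"
    "nu powr (3/4) = n ^ 3" "sqrt nu = n ^ 2"
    using powr_quarter_power[OF s, of 5] powr_quarter_power[OF s, of 3] powr_quarter_power[OF s, of 2]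
      powr_quarter_power[OF nu, of 3] powr_quarter_power[OF nu, of 2] s nu
    by (simp_all add: \<sigma>_def n_def powr_minus_divide powr_half_sqrt[symmetric])
  show ?thesis
    unfolding powers n_def[symmetric] pi_powr_three_halves
    using pos by (simp add: field_simps eval_nat_numeral)
qed

lemma kernel_Linf_estimate_Kker:
  assumes eps: "eps = 1 \<or> eps = -1" and nu: "0 < nu"
  shows "kernel_Linf_estimate (Kker eps nu) (5 / (pi * sqrt nu))"
  unfolding kernel_Linf_estimate_def
proof (intro allI impI)
  fix s x y :: real and F G :: "real \<times> real \<Rightarrow> real"
  assume s: "0 < s" and F: "integrable lborel F" and G: "integrable lborel G" and FG: "weak_dyy F G"
  define W where "W r = r powr (-1/4) * exp (- r)" for r :: real
  define \<alpha> where "\<alpha> r = s powr (-1/2) * sqrt (r / nu)" for r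
  define \<beta> where "\<beta> r = (s powr (-3/4))\<^sup>2 / (4 * eps) * sqrt (r / nu)" for r
  define P where "P = s powr - (5/4) / (4 * pi powr (3/2) * nu powr (3/4))"
  define A where "A = 2 * s powr (3/4) * nu powr (1/4)"
  have "X * s powr (-1/2) * sqrt (r / nu) + (Y * s powr (-3/4))\<^sup>2 / (4 * eps) * sqrt (r / nu) - pi / 4 * eps
      = \<alpha> r * X + \<beta> r * Y\<^sup>2 + - (pi / 4 * eps)" for X Y r
    unfolding \<alpha>_def \<beta>_def power_mult_distrib by (simp add: algebra_simps)
  then have "Kker eps nu X Y s = P * (LBINT r:{0<..}. W r * cos (\<alpha> r * X + \<beta> r * Y\<^sup>2 + - (pi / 4 * eps)))"
    for X Y
    unfolding Kker_def Kstar_def W_def P_def by simp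
  then have "(\<integral>w. Kker eps nu (x - fst w) (y - snd w) s * F w \<partial>lborel)
      = (\<integral>w. P * (F w * (LBINT r:{0<..}. W r *
          cos (\<alpha> r * (x - fst w) + \<beta> r * (y - snd w)\<^sup>2 + - (pi / 4 * eps)))) \<partial>lborel)"
    by (simp add: mult_ac)
  then have "\<bar>\<integral>w. Kker eps nu (x - fst w) (y - snd w) s * F w \<partial>lborel\<bar>
      = \<bar>P\<bar> * \<bar>\<integral>w. F w * (LBINT r:{0<..}. W r *
          cos (\<alpha> r * (x - fst w) + \<beta> r * (y - snd w)\<^sup>2 + - (pi / 4 * eps))) \<partial>lborel\<bar>"
    by (simp add: abs_mult)
  also have "\<dots> \<le> \<bar>P\<bar> * (10 * (A * sqrt pi) * (L1norm F + L1norm G))"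
  proof (intro mult_left_mono chirp_superposition_convolution_bound[OF F G FG])
    show "W \<in> borel_measurable borel" "\<beta> \<in> borel_measurable borel" "\<alpha> \<in> borel_measurable borel"
      unfolding W_def \<alpha>_def \<beta>_def by measurable
    show "\<beta> r \<noteq> 0" if "0 < r" for r
      using that eps s nu by (auto simp: \<beta>_def)
    show "integrable lborel (\<lambda>r. indicator {0<..} r * W r)"
      using Gamma_halfline_integral(2)[of "3/4"] by (simp add: W_def)
    show "(\<integral>\<^sup>+r. ennreal (indicator {0<..} r * (\<bar>W r\<bar> / sqrt \<bar>\<beta> r\<bar>)) \<partial>lborel)
        \<le> ennreal (A * sqrt pi)"
      using nn_integral_Kstar_majorant[OF s nu, of eps] eps by (auto simp: W_def \<beta>_def A_def)
  qed (use s nu in \<open>auto simp: A_def\<close>)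
  also have "\<dots> = (P * (10 * (A * sqrt pi))) * (L1norm F + L1norm G)"
    by (simp add: P_def abs_mult)
  also have "P * (10 * (A * sqrt pi)) = 5 / (pi * sqrt nu) / sqrt s"
    unfolding P_def A_def by (rule Kker_scaling_constant[OF s nu])
  finally show "\<bar>\<integral>w. Kker eps nu (x - fst w) (y - snd w) s * F w \<partial>lborel\<bar>
      \<le> 5 / (pi * sqrt nu) / sqrt s * (L1norm F + L1norm G)" .
qed

lemma nn_integral_inverse_sqrt_distance:
  fixes a t :: real
  assumes "a < t"
  shows "(\<integral>\<^sup>+\<tau>. ennreal (indicator {a..t} \<tau> * (t - \<tau>) powr (-1/2)) \<partial>lborel) = ennreal (2 * sqrt (t - a))"
proof -
  define c where "c = t - a"
  have c: "0 < c" using assms by (simp add: c_def)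
  have "((\<lambda>u. u powr (-1/2)) has_integral (c powr (-1/2 + 1) / (-1/2 + 1))) {0..c}"
    by (rule has_integral_powr_from_0) (use c in auto)
  then have "(\<integral>\<^sup>+u. ennreal (u powr (-1/2)) * indicator {0..c} u \<partial>lborel) = ennreal (2 * sqrt c)"
    using c by (subst nn_integral_has_integral_lebesgue') (auto simp: powr_half_sqrt mult.commute)
  moreover have "(\<integral>\<^sup>+u. ennreal (u powr (-1/2)) * indicator {0..c} u \<partial>lborel)
      = (\<integral>\<^sup>+\<tau>. ennreal ((t + -1 * \<tau>) powr (-1/2)) * indicator {0..c} (t + -1 * \<tau>) \<partial>lborel)"
    using nn_integral_real_affine[of "\<lambda>u. ennreal (u powr (-1/2)) * indicator {0..c} u" "-1" t] by simp
  moreover have "ennreal ((t + -1 * \<tau>) powr (-1/2)) * indicator {0..c} (t + -1 * \<tau>)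
      = ennreal (indicator {a..t} \<tau> * (t - \<tau>) powr (-1/2))" for \<tau>
    by (auto simp: indicator_def c_def)
  ultimately show ?thesis
    unfolding c_def by simp
qed

lemma abs_duhamel_integrand_le:
  fixes Ker :: "real \<Rightarrow> real \<Rightarrow> real \<Rightarrow> real" and f g :: "real \<Rightarrow> real \<times> real \<Rightarrow> real"
  assumes Ker: "kernel_Linf_estimate Ker C" and "0 \<le> C" and \<tau>: "0 < \<tau>" "\<tau> < t"
    and "integrable lborel (f \<tau>)" and "integrable lborel (g \<tau>)" and "weak_dyy (f \<tau>) (g \<tau>)"
    and M: "L1norm (f \<tau>) + L1norm (g \<tau>) \<le> M"
  shows "\<bar>\<integral>w. Ker (fst z - fst w) (snd z - snd w) (t - \<tau>) * f \<tau> w \<partial>lborel\<bar> \<le> C * M * (t - \<tau>) powr (-1/2)"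
proof -
  have "0 < t - \<tau>" using \<tau> by simp
  have "\<bar>\<integral>w. Ker (fst z - fst w) (snd z - snd w) (t - \<tau>) * f \<tau> w \<partial>lborel\<bar>
      \<le> C / sqrt (t - \<tau>) * (L1norm (f \<tau>) + L1norm (g \<tau>))"
    using assms \<open>0 < t - \<tau>\<close> by (intro kernel_Linf_estimateD[OF Ker])
  also have "\<dots> \<le> C / sqrt (t - \<tau>) * M"
    using M \<open>0 \<le> C\<close> \<open>0 < t - \<tau>\<close> by (intro mult_left_mono) auto
  also have "\<dots> = C * M * (t - \<tau>) powr (-1/2)"
    using \<open>0 < t - \<tau>\<close> by (simp add: powr_minus_divide powr_half_sqrt)
  finally show ?thesis .
qed

lemma duhamel_bound:
  fixes Ker :: "real \<Rightarrow> real \<Rightarrow> real \<Rightarrow> real" and f g :: "real \<Rightarrow> real \<times> real \<Rightarrow> real"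
  assumes a: "0 < a" "a < t" and Ker: "kernel_Linf_estimate Ker C" and "0 \<le> C"
    and f: "\<And>\<tau>. 0 < \<tau> \<Longrightarrow> integrable lborel (f \<tau>)" and g: "\<And>\<tau>. 0 < \<tau> \<Longrightarrow> integrable lborel (g \<tau>)"
    and fg: "\<And>\<tau>. 0 < \<tau> \<Longrightarrow> weak_dyy (f \<tau>) (g \<tau>)"
    and M: "\<And>\<tau>. \<tau> \<in> {a..t} \<Longrightarrow> L1norm (f \<tau>) + L1norm (g \<tau>) \<le> M"
  shows "\<bar>duhamel Ker f a t z\<bar> \<le> 2 * C * sqrt t * M"
proof -
  have "0 \<le> M"
    using M[of a] a L1norm_nonneg[of "f a"] L1norm_nonneg[of "g a"] by simp
  define I where "I \<tau> = (\<integral>w. Ker (fst z - fst w) (snd z - snd w) (t - \<tau>) * f \<tau> w \<partial>lborel)" for \<tau>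
  \<comment> \<open>\<open>\<tau> = t\<close>, where the kernel would be evaluated at time \<open>0\<close>, is a null set.\<close>
  have "AE \<tau> in lborel. ennreal \<bar>indicator {a..t} \<tau> * I \<tau>\<bar>
      \<le> ennreal (C * M) * ennreal (indicator {a..t} \<tau> * (t - \<tau>) powr (-1/2))"
    using AE_lborel_singleton[of t]
  proof eventually_elim
    case (elim \<tau>)
    show ?case
    proof (cases "\<tau> \<in> {a..t}")
      case True
      then have "\<bar>I \<tau>\<bar> \<le> C * M * (t - \<tau>) powr (-1/2)"
        unfolding I_def using elim a f g fg M \<open>0 \<le> C\<close> by (intro abs_duhamel_integrand_le[OF Ker, where g = g]) auto
      then show ?thesis
        using True \<open>0 \<le> C\<close> \<open>0 \<le> M\<close> by (simp add: ennreal_mult[symmetric])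
    qed simp
  qed
  then have "(\<integral>\<^sup>+\<tau>. ennreal \<bar>indicator {a..t} \<tau> * I \<tau>\<bar> \<partial>lborel)
      \<le> (\<integral>\<^sup>+\<tau>. ennreal (C * M) * ennreal (indicator {a..t} \<tau> * (t - \<tau>) powr (-1/2)) \<partial>lborel)"
    by (rule nn_integral_mono_AE)
  also have "\<dots> = ennreal (C * M) * (\<integral>\<^sup>+\<tau>. ennreal (indicator {a..t} \<tau> * (t - \<tau>) powr (-1/2)) \<partial>lborel)"
    by (rule nn_integral_cmult) measurable
  also have "\<dots> = ennreal (C * M) * ennreal (2 * sqrt (t - a))"
    unfolding nn_integral_inverse_sqrt_distance[OF a(2)] ..
  also have "\<dots> = ennreal (C * M * (2 * sqrt (t - a)))"
    using \<open>0 \<le> C\<close> \<open>0 \<le> M\<close> a by (simp add: ennreal_mult)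
  finally have "\<bar>duhamel Ker f a t z\<bar> \<le> C * M * (2 * sqrt (t - a))"
    unfolding duhamel_def set_lebesgue_integral_def real_scaleR_def I_def[symmetric]
    by (rule abs_integral_le_of_nn_integral_le) (use \<open>0 \<le> C\<close> \<open>0 \<le> M\<close> a in simp)
  also have "\<dots> \<le> C * M * (2 * sqrt t)"
    using \<open>0 \<le> C\<close> \<open>0 \<le> M\<close> a by (intro mult_left_mono) auto
  finally show ?thesis by (simp add: mult_ac)
qed

lemma abs_L1norm_diff_le:
  assumes u: "integrable lborel u" and v: "integrable lborel v"
  shows "\<bar>L1norm u - L1norm v\<bar> \<le> L1norm (\<lambda>z. u z - v z)"
proof -
  have "L1norm u - L1norm v = (\<integral>z. \<bar>u z\<bar> - \<bar>v z\<bar> \<partial>lborel)"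
    unfolding L1norm_def using u v by (simp add: Bochner_Integration.integral_diff)
  also have "\<bar>\<dots>\<bar> \<le> (\<integral>z. \<bar>\<bar>u z\<bar> - \<bar>v z\<bar>\<bar> \<partial>lborel)"
    using integral_norm_bound[of lborel "\<lambda>z. \<bar>u z\<bar> - \<bar>v z\<bar>"] by simp
  also have "\<dots> \<le> L1norm (\<lambda>z. u z - v z)"
    unfolding L1norm_def using u v by (intro integral_mono) (auto intro: abs_triangle_ineq3)
  finally show ?thesis .
qed

lemma L1_cont_imp_continuous_on_L1norm:
  assumes f: "L1_cont f" and a: "0 < a"
  shows "continuous_on {a..t} (\<lambda>\<tau>. L1norm (f \<tau>))"
  unfolding continuous_on_def
proof
  fix \<tau>\<^sub>0 assume "\<tau>\<^sub>0 \<in> {a..t}"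
  then have "0 < \<tau>\<^sub>0" using a by auto
  have "((\<lambda>\<tau>. L1norm (\<lambda>z. f \<tau> z - f \<tau>\<^sub>0 z)) \<longlongrightarrow> 0) (at \<tau>\<^sub>0 within {a..t})"
    using f \<open>0 < \<tau>\<^sub>0\<close> a unfolding L1_cont_def by (auto intro: tendsto_within_subset)
  moreover have "\<forall>\<^sub>F \<tau> in at \<tau>\<^sub>0 within {a..t}. norm (L1norm (f \<tau>) - L1norm (f \<tau>\<^sub>0)) \<le> L1norm (\<lambda>z. f \<tau> z - f \<tau>\<^sub>0 z)"
    using f a \<open>0 < \<tau>\<^sub>0\<close> unfolding eventually_at_filter L1_cont_def
    by (intro always_eventually) (auto intro: abs_L1norm_diff_le)
  ultimately have "((\<lambda>\<tau>. L1norm (f \<tau>) - L1norm (f \<tau>\<^sub>0)) \<longlongrightarrow> 0) (at \<tau>\<^sub>0 within {a..t})"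
    by (rule Lim_null_comparison[rotated])
  then show "((\<lambda>\<tau>. L1norm (f \<tau>)) \<longlongrightarrow> L1norm (f \<tau>\<^sub>0)) (at \<tau>\<^sub>0 within {a..t})"
    by (simp add: LIM_zero_iff)
qed

lemma L1_cont_le_SUP:
  assumes "L1_cont f" and "L1_cont g" and "0 < a" and "\<tau> \<in> {a..t}"
  shows "L1norm (f \<tau>) + L1norm (g \<tau>) \<le> (SUP \<tau>\<in>{a..t}. L1norm (f \<tau>) + L1norm (g \<tau>))"
proof -
  have "compact ((\<lambda>\<tau>. L1norm (f \<tau>) + L1norm (g \<tau>)) ` {a..t})"
    using assms by (intro compact_continuous_image continuous_on_add L1_cont_imp_continuous_on_L1norm) auto
  then show ?thesis
    using assms(4) by (intro cSUP_upper bounded_imp_bdd_above compact_imp_bounded)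
qed

lemma duhamel_Linf_bound:
  fixes Ker :: "real \<Rightarrow> real \<Rightarrow> real \<Rightarrow> real" and f g :: "real \<Rightarrow> real \<times> real \<Rightarrow> real"
  assumes Ker: "kernel_Linf_estimate Ker C" and "0 \<le> C" and a: "0 < a" "a < t"
    and f: "L1_cont f" and g: "L1_cont g" and fg: "\<forall>\<tau>>0. weak_dyy (f \<tau>) (g \<tau>)"
  shows "AE z in lborel. \<bar>duhamel Ker f a t z\<bar> \<le> 2 * C * sqrt t * (SUP \<tau>\<in>{a..t}. L1norm (f \<tau>) + L1norm (g \<tau>))"
proof (rule AE_I2)
  fix z
  show "\<bar>duhamel Ker f a t z\<bar> \<le> 2 * C * sqrt t * (SUP \<tau>\<in>{a..t}. L1norm (f \<tau>) + L1norm (g \<tau>))"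
    using f g fg
    by (intro duhamel_bound[OF a Ker \<open>0 \<le> C\<close> _ _ _ L1_cont_le_SUP[OF f g a(1)]]) (auto simp: L1_cont_def)
qed

theorem lemma3p5:
  fixes eps nu :: real
  assumes "eps = 1 \<or> eps = -1" and "nu > 0"
  shows "\<exists>C>0. \<forall>a t (f :: real \<Rightarrow> real \<times> real \<Rightarrow> real) (g :: real \<Rightarrow> real \<times> real \<Rightarrow> real).
           0 < a \<longrightarrow> a < t \<longrightarrow> L1_cont f \<longrightarrow> L1_cont g \<longrightarrow>
           (\<forall>\<tau>>0. weak_dyy (f \<tau>) (g \<tau>)) \<longrightarrow>
           (AE z in lborel. \<bar>duhamel (Sker eps nu) f a t z\<bar>
               \<le> C * sqrt t * (SUP \<tau>\<in>{a..t}. L1norm (f \<tau>) + L1norm (g \<tau>))) \<and>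
           (AE z in lborel. \<bar>duhamel (Kker eps nu) f a t z\<bar>
               \<le> C * sqrt t * (SUP \<tau>\<in>{a..t}. L1norm (f \<tau>) + L1norm (g \<tau>)))"
proof (intro exI[of _ "2 * (5 / (pi * sqrt nu))"] conjI allI impI)
  fix a t :: real and f g :: "real \<Rightarrow> real \<times> real \<Rightarrow> real"
  assume a: "0 < a" "a < t" and f: "L1_cont f" and g: "L1_cont g" and fg: "\<forall>\<tau>>0. weak_dyy (f \<tau>) (g \<tau>)"
  have "0 \<le> 5 / (pi * sqrt nu)"
    using assms(2) by simp
  then show "AE z in lborel. \<bar>duhamel (Sker eps nu) f a t z\<bar>
      \<le> 2 * (5 / (pi * sqrt nu)) * sqrt t * (SUP \<tau>\<in>{a..t}. L1norm (f \<tau>) + L1norm (g \<tau>))"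
    and "AE z in lborel. \<bar>duhamel (Kker eps nu) f a t z\<bar>
      \<le> 2 * (5 / (pi * sqrt nu)) * sqrt t * (SUP \<tau>\<in>{a..t}. L1norm (f \<tau>) + L1norm (g \<tau>))"
    by (rule duhamel_Linf_bound[OF kernel_Linf_estimate_Sker[OF assms] _ a f g fg]
        duhamel_Linf_bound[OF kernel_Linf_estimate_Kker[OF assms] _ a f g fg])+
qed (use assms(2) in simp)

end
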